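(* In the quantum switch model of the context (with $W=\infty$), suppose $(\lambda_{ij}+\epsilon)_{i,j\in\mathcal K}\in\Lambda$ for some $\epsilon>0$. Then the quantum switch is stable under the stationary protocol $\pi_{\mathrm{STAT}}$ defined in the context.
   Context: Quantum switch model. There are $K$ end nodes $\mathcal K=\{1,\dots,K\}$ and a switch (node $0$); time is slotted, $t=0,1,2,\dots$; pair-indexed quantities are symmetric in $(i,j)$. In slot $t$: (i) $C_{0i}(t)\in\{0,1\}$ EPR pairs are generated between the switch and node $i$, where $\{C_{0i}(t)\}_{t\ge0}$ are mutually independent Bernoulli processes (i.i.d. in $t$) with mean $p_i$. (ii) The switch chooses nonnegative integers $F_{ij}(t)=F_{ji}(t)$ (entanglement swaps for pair $(i,j)$, each consuming one stored switch–$i$ and one stored switch–$j$ pair) with $\sum_iF_{ij}(t)\le E_{0j}(t)$; there is no limit on swaps per slot ($W=\infty$); each swap succeeds independently with probability $q$; $R_{ij}(t)$ is the number of successes. (iii) $A_{ij}(t)\in\mathbb N$ new requests for pair $(i,j)$ arrive. Dynamics: $U_{ij}(t+1)=[U_{ij}(t)-E_{ij}(t)-R_{ij}(t)]^++A_{ij}(t)$, $E_{ij}(t+1)=[E_{ij}(t)+R_{ij}(t)-U_{ij}(t)]^+$, $E_{0i}(t+1)=E_{0i}(t)-\sum_jF_{ij}(t)+C_{0i}(t)$, with zero initial values; $U_{ij}$ = pending requests, $E_{ij}$ = stored $i$–$j$ pairs, $E_{0i}$ = stored switch–$i$ pairs; memory unlimited, no decoherence. Requests: $\{A_{ij}(t)\}_t$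 mutually independent across pairs, each stationary ergodic with rate $\lambda_{ij}$, and $\mathbb E[A_{ij}(t)^2\mid H(t)=h]\le A_{\max}^2$ for every $t,i,j$ and realization $h$ of the history $H(t)=(E_{ij}(\tau),U_{ij}(\tau),A_{ij}(\tau),R_{ij}(\tau),C_{0i}(\tau))_{\tau=0}^{t-1}$. Stability: for all $i,j$, $\limsup_{t\to\infty}\frac1t\sum_{\tau=0}^{t-1}\mathbb P[U_{ij}(\tau)>V]\to0$ as $V\to\infty$. $\Lambda$ is the set of nonnegative matrices $(\lambda_{ij})$ for which there exist nonnegative $f_{ij}=f_{ji}$ with $\sum_if_{ij}\le p_j$ for all $j$ and $\lambda_{ij}\le qf_{ij}$ for all $i,j$. Stationary protocol $\pi_{\mathrm{STAT}}$: with $\epsilon$ as in the claim, fix $\tilde f_{ij}=\tilde f_{ji}\ge0$ with $\sum_i\tilde f_{ij}\le p_j$ and $\lambda_{ij}+\epsilon\le q\tilde f_{ij}$ (e.g. $\tilde f_{ij}=(\lambda_{ij}+\epsilon)/q$). Each switch–$i$ pair generated in any slot is, independently, labelled $(i,j)$ with probability $\tilde f_{ij}/p_i$. Let $\mathcal M^i_{ij}(t)$ be the set of switch–$i$ pairs labelled $(i,j)$ not consumed up to slot $t$; whenever $\mathcal M^i_{ij}(t)$ and $\mathcal M^j_{ij}(t)$ are both nonempty, the switch performs swaps for pair $(i,j)$ consuming one pair from each until one of them is empty. *)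

theory Defs
  imports "HOL-Probability.Probability"
begin

text \<open>Primitive randomness on a probability space M:
   C t i w      : EPR pair generated between switch and node i in slot t,
   L t i w      : label (partner node j) of the switch-i pair generated in slot t
                  (any value outside the node set / equal to i means "unlabelled"),
   S t i j k w  : success of the k-th swap for pair (i,j), i<j, in slot t,
   A t i j w    : requests arriving for pair (i,j) in slot t (symmetric in i,j).\<close>

definition nodes :: "nat \<Rightarrow> nat set" where
  "nodes Kn = {1..Kn}"

definition upairs :: "nat \<Rightarrow> (nat \<times> nat) set" where
  "upairs Kn = {(i, j). i \<in> nodes Kn \<and> j \<in> nodes Kn \<and> i < j}"

text \<open>stat_M C L t i j = number of switch-i pairs labelled (i,j) not consumed up to slot t.\<close>
fun stat_M :: "(nat \<Rightarrow> nat \<Rightarrow> 'a \<Rightarrow> bool) \<Rightarrow> (nat \<Rightarrow> nat \<Rightarrow> 'a \<Rightarrow> nat)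
    \<Rightarrow> nat \<Rightarrow> nat \<Rightarrow> nat \<Rightarrow> 'a \<Rightarrow> nat" where
  "stat_M C L 0 i j w = 0"
| "stat_M C L (Suc t) i j w =
     stat_M C L t i j w - min (stat_M C L t i j w) (stat_M C L t j i w)
     + (if C t i w \<and> L t i w = j then 1 else 0)"

definition stat_F :: "(nat \<Rightarrow> nat \<Rightarrow> 'a \<Rightarrow> bool) \<Rightarrow> (nat \<Rightarrow> nat \<Rightarrow> 'a \<Rightarrow> nat)
    \<Rightarrow> nat \<Rightarrow> nat \<Rightarrow> nat \<Rightarrow> 'a \<Rightarrow> nat" where
  "stat_F C L t i j w = min (stat_M C L t i j w) (stat_M C L t j i w)"

definition stat_R :: "(nat \<Rightarrow> nat \<Rightarrow> 'a \<Rightarrow> bool) \<Rightarrow> (nat \<Rightarrow> nat \<Rightarrow> 'a \<Rightarrow> nat)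
    \<Rightarrow> (nat \<Rightarrow> nat \<Rightarrow> nat \<Rightarrow> nat \<Rightarrow> 'a \<Rightarrow> bool) \<Rightarrow> nat \<Rightarrow> nat \<Rightarrow> nat \<Rightarrow> 'a \<Rightarrow> nat" where
  "stat_R C L S t i j w =
     card {k. k < stat_F C L t i j w \<and> S t (min i j) (max i j) k w}"

text \<open>(U_ij(t), E_ij(t)): pending requests and stored i-j pairs.\<close>
fun stat_UE :: "(nat \<Rightarrow> nat \<Rightarrow> 'a \<Rightarrow> bool) \<Rightarrow> (nat \<Rightarrow> nat \<Rightarrow> 'a \<Rightarrow> nat)
    \<Rightarrow> (nat \<Rightarrow> nat \<Rightarrow> nat \<Rightarrow> nat \<Rightarrow> 'a \<Rightarrow> bool) \<Rightarrow> (nat \<Rightarrow> nat \<Rightarrow> nat \<Rightarrow> 'a \<Rightarrow> nat)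
    \<Rightarrow> nat \<Rightarrow> nat \<Rightarrow> nat \<Rightarrow> 'a \<Rightarrow> nat \<times> nat" where
  "stat_UE C L S A 0 i j w = (0, 0)"
| "stat_UE C L S A (Suc t) i j w =
     (let u = fst (stat_UE C L S A t i j w); e = snd (stat_UE C L S A t i j w);
          r = stat_R C L S t i j w
      in (u - e - r + A t i j w, e + r - u))"

definition stat_U where "stat_U C L S A t i j w = fst (stat_UE C L S A t i j w)"
definition stat_E where "stat_E C L S A t i j w = snd (stat_UE C L S A t i j w)"

definition gen_sigma :: "'a measure \<Rightarrow> ('a \<Rightarrow> nat) set \<Rightarrow> 'a measure" where
  "gen_sigma M Fs = sigma (space M) {{w \<in> space M. f w = n} | f n. f \<in> Fs}"

definition stat_hist :: "'a measure \<Rightarrow> nat \<Rightarrow> (nat \<Rightarrow> nat \<Rightarrow> 'a \<Rightarrow> bool) \<Rightarrow> (nat \<Rightarrow> nat \<Rightarrow> 'a \<Rightarrow> nat)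
    \<Rightarrow> (nat \<Rightarrow> nat \<Rightarrow> nat \<Rightarrow> nat \<Rightarrow> 'a \<Rightarrow> bool) \<Rightarrow> (nat \<Rightarrow> nat \<Rightarrow> nat \<Rightarrow> 'a \<Rightarrow> nat)
    \<Rightarrow> nat \<Rightarrow> 'a measure" where
  "stat_hist M Kn C L S A t = gen_sigma M
     ({stat_E C L S A tau i j | tau i j. tau < t \<and> i \<in> nodes Kn \<and> j \<in> nodes Kn \<and> i \<noteq> j}
    \<union> {stat_U C L S A tau i j | tau i j. tau < t \<and> i \<in> nodes Kn \<and> j \<in> nodes Kn \<and> i \<noteq> j}
    \<union> {A tau i j | tau i j. tau < t \<and> i \<in> nodes Kn \<and> j \<in> nodes Kn \<and> i \<noteq> j}
    \<union> {stat_R C L S tau i j | tau i j. tau < t \<and> i \<in> nodes Kn \<and> j \<in> nodes Kn \<and> i \<noteq> j}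
    \<union> {(\<lambda>w. of_bool (C tau i w)) | tau i. tau < t \<and> i \<in> nodes Kn})"

datatype src = SrcC nat nat | SrcL nat nat | SrcS nat nat nat nat

definition src_index :: "nat \<Rightarrow> src set" where
  "src_index Kn = {SrcC t i | t i. i \<in> nodes Kn} \<union> {SrcL t i | t i. i \<in> nodes Kn}
     \<union> {SrcS t i j k | t i j k. (i, j) \<in> upairs Kn}"

definition src_var :: "(nat \<Rightarrow> nat \<Rightarrow> 'a \<Rightarrow> bool) \<Rightarrow> (nat \<Rightarrow> nat \<Rightarrow> 'a \<Rightarrow> nat)
    \<Rightarrow> (nat \<Rightarrow> nat \<Rightarrow> nat \<Rightarrow> nat \<Rightarrow> 'a \<Rightarrow> bool) \<Rightarrow> src \<Rightarrow> 'a \<Rightarrow> nat" where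
  "src_var C L S s w = (case s of SrcC t i \<Rightarrow> of_bool (C t i w) | SrcL t i \<Rightarrow> L t i w
     | SrcS t i j k \<Rightarrow> of_bool (S t i j k w))"

definition nat_seq_space :: "(nat \<Rightarrow> nat) measure" where
  "nat_seq_space = PiM UNIV (\<lambda>_. count_space UNIV)"

definition stationary_process :: "'a measure \<Rightarrow> (nat \<Rightarrow> 'a \<Rightarrow> nat) \<Rightarrow> bool" where
  "stationary_process M X \<longleftrightarrow> (\<forall>s. distr M nat_seq_space (\<lambda>w t. X (t + s) w)
      = distr M nat_seq_space (\<lambda>w t. X t w))"

definition ergodic_process :: "'a measure \<Rightarrow> (nat \<Rightarrow> 'a \<Rightarrow> nat) \<Rightarrow> bool" where
  "ergodic_process M X \<longleftrightarrow> (\<forall>B \<in> sets nat_seq_space.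
      (\<forall>f. (\<lambda>t. f (Suc t)) \<in> B \<longleftrightarrow> f \<in> B) \<longrightarrow>
      measure M {w \<in> space M. (\<lambda>t. X t w) \<in> B} \<in> {0, 1})"

definition indep_rv :: "'a measure \<Rightarrow> 'b measure \<Rightarrow> ('a \<Rightarrow> 'b) \<Rightarrow> 'c measure \<Rightarrow> ('a \<Rightarrow> 'c) \<Rightarrow> bool" where
  "indep_rv M Mx X My Y \<longleftrightarrow> X \<in> measurable M Mx \<and> Y \<in> measurable M My \<and>
     (\<forall>P \<in> sets Mx. \<forall>Q \<in> sets My.
        measure M {w \<in> space M. X w \<in> P \<and> Y w \<in> Q}
        = measure M {w \<in> space M. X w \<in> P} * measure M {w \<in> space M. Y w \<in> Q})"

definition in_Lambda :: "nat \<Rightarrow> (nat \<Rightarrow> real) \<Rightarrow> real \<Rightarrow> (nat \<Rightarrow> nat \<Rightarrow> real) \<Rightarrow> bool" where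
  "in_Lambda Kn p q lam \<longleftrightarrow> (\<exists>f :: nat \<Rightarrow> nat \<Rightarrow> real.
      (\<forall>i j. f i j = f j i \<and> 0 \<le> f i j) \<and>
      (\<forall>j \<in> nodes Kn. (\<Sum>i \<in> nodes Kn - {j}. f i j) \<le> p j) \<and>
      (\<forall>i \<in> nodes Kn. \<forall>j \<in> nodes Kn. i \<noteq> j \<longrightarrow> lam i j \<le> q * f i j))"

definition switch_stable :: "'a measure \<Rightarrow> nat \<Rightarrow> (nat \<Rightarrow> nat \<Rightarrow> nat \<Rightarrow> 'a \<Rightarrow> nat) \<Rightarrow> bool" where
  "switch_stable M Kn U \<longleftrightarrow> (\<forall>i \<in> nodes Kn. \<forall>j \<in> nodes Kn. i \<noteq> j \<longrightarrow>
     ((\<lambda>V::real. limsup (\<lambda>t::nat. ereal ((1 / real t) *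
         (\<Sum>tau<t. measure M {w \<in> space M. real (U tau i j w) > V})))) \<longlongrightarrow> 0) at_top)"

end

theory Submission
  imports Defs
begin

text \<open>Fix a pair \<open>(i, j)\<close> and let \<open>f = f~_ij\<close>. Under \<open>\<pi>_STAT\<close> the switch pairs labelled
  \<open>(i, j)\<close> arrive at \<open>i\<close> and at \<open>j\<close> as independent Bernoulli(\<open>f\<close>) streams that are matched
  greedily, so after \<open>n\<close> slots the number of swaps lags behind either stream by at most one plus
  the imbalance of the two streams, and the number of successes is \<open>q\<close> times the number of
  swaps up to a sum of orthogonal centred terms. Chebyshev's inequality then bounds the
  probability that fewer than \<open>n (\<lambda>_ij + \<epsilon>/3)\<close> requests have been served by \<open>O(1/n)\<close>, using
  \<open>q f \<ge> \<lambda>_ij + \<epsilon>\<close>. On the other hand, more than \<open>n (\<lambda>_ij + \<epsilon>/3)\<close> requests arrive with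
  vanishing probability, by a maximal inequality for stationary sequences and the 0-1 law for
  the shift-invariant event that the running averages exceed the mean infinitely often.
  A backlog \<open>U_ij(t+1) > V\<close> forces either \<open>A_ij(t) > V\<close> or services lagging behind arrivals, so
  the Cesaro averages of \<open>P[U_ij(t) > V]\<close> are eventually at most \<open>P[A_ij(0) > V]\<close>, which tends
  to 0 as \<open>V \<rightarrow> \<infinity>\<close>.\<close>

section \<open>Functions of independent discrete sources\<close>

lemma sets_PiM_count_space_finite:
  assumes K: "finite K"
  shows "sets (PiM K (\<lambda>_. count_space (UNIV :: 'b::countable set)))
    = Pow (space (PiM K (\<lambda>_. count_space (UNIV :: 'b set))))"
proof -
  let ?P = "PiM K (\<lambda>_. count_space (UNIV :: 'b set))"
  have "A \<in> sets ?P" if A: "A \<subseteq> space ?P" for A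
  proof -
    have "countable A"
      using countable_subset[OF A] countable_PiE[OF K, of "\<lambda>_. UNIV :: 'b set"]
      by (simp add: space_PiM)
    moreover have "{x} \<in> sets ?P" if "x \<in> A" for x
    proof -
      have "{x} = PiE K (\<lambda>k. {x k})"
        using that A by (intro PiE_singleton[symmetric]) (auto simp: space_PiM PiE_def)
      also have "\<dots> \<in> sets ?P"
        using K by (intro sets_PiM_I_finite) auto
      finally show ?thesis .
    qed
    ultimately have "(\<Union>x\<in>A. {x}) \<in> sets ?P"
      by (intro sets.countable_UN') auto
    then show ?thesis by simp
  qed
  then show ?thesis using sets.sets_into_space by auto
qed

lemma borel_measurable_PiM_count_space_finite:
  fixes g :: "('k \<Rightarrow> 'b::countable) \<Rightarrow> real"
  assumes "finite K"
  shows "g \<in> borel_measurable (PiM K (\<lambda>_. count_space UNIV))"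
proof -
  have sets_eq: "sets (PiM K (\<lambda>_. count_space (UNIV :: 'b set)))
      = sets (count_space (space (PiM K (\<lambda>_. count_space (UNIV :: 'b set)))))"
    using sets_PiM_count_space_finite[OF assms] by simp
  show ?thesis
    unfolding measurable_cong_sets[OF sets_eq refl] by simp
qed

definition var_block :: "('i \<Rightarrow> 'a \<Rightarrow> 'b) \<Rightarrow> 'i set \<Rightarrow> 'a \<Rightarrow> 'i \<Rightarrow> 'b" where
  "var_block X K w = restrict (\<lambda>i. X i w) K"

lemma measurable_var_block:
  assumes "\<And>i. i \<in> K \<Longrightarrow> X i \<in> measurable M (count_space UNIV)"
  shows "var_block X K \<in> measurable M (PiM K (\<lambda>_. count_space UNIV))"
  unfolding var_block_def using assms by (intro measurable_restrict) auto

lemma borel_measurable_var_block_comp: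
  fixes X :: "'i \<Rightarrow> 'a \<Rightarrow> 'b::countable" and g :: "('i \<Rightarrow> 'b) \<Rightarrow> real"
  assumes "\<And>i. i \<in> K \<Longrightarrow> X i \<in> measurable M (count_space UNIV)" "finite K"
  shows "(\<lambda>w. g (var_block X K w)) \<in> borel_measurable M"
  using measurable_comp[OF measurable_var_block[OF assms(1)]
      borel_measurable_PiM_count_space_finite[OF assms(2)]]
  by (simp add: comp_def)

lemma sets_var_block_pred:
  fixes X :: "'i \<Rightarrow> 'a \<Rightarrow> 'b::countable"
  assumes "\<And>i. i \<in> K \<Longrightarrow> X i \<in> measurable M (count_space UNIV)" "finite K"
  shows "{w \<in> space M. Q (var_block X K w)} \<in> sets M"
proof -
  let ?P = "PiM K (\<lambda>_. count_space (UNIV :: 'b set))"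
  have m: "var_block X K \<in> measurable M ?P"
    by (rule measurable_var_block[OF assms(1)])
  have "{v \<in> space ?P. Q v} \<in> sets ?P"
    using sets_PiM_count_space_finite[OF assms(2)] by auto
  from measurable_sets[OF m this]
  have "var_block X K -` {v \<in> space ?P. Q v} \<inter> space M \<in> sets M" .
  moreover have "var_block X K -` {v \<in> space ?P. Q v} \<inter> space M = {w \<in> space M. Q (var_block X K w)}"
    using measurable_space[OF m] by auto
  ultimately show ?thesis by simp
qed

lemma (in finite_measure) measure_le_of_subset_Un3:
  assumes "X \<subseteq> B1 \<union> B2 \<union> B3" "B1 \<in> sets M" "B2 \<in> sets M" "B3 \<in> sets M"
  shows "measure M X \<le> measure M B1 + measure M B2 + measure M B3"
proof -
  have "measure M X \<le> measure M (B1 \<union> B2 \<union> B3)"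
    using assms by (intro finite_measure_mono) auto
  also have "\<dots> \<le> measure M (B1 \<union> B2) + measure M B3"
    using assms by (intro measure_Un_le) auto
  also have "measure M (B1 \<union> B2) \<le> measure M B1 + measure M B2"
    using assms by (intro measure_Un_le) auto
  finally show ?thesis by simp
qed

context prob_space
begin

lemma integral_var_block_mult:
  fixes X :: "'i \<Rightarrow> 'a \<Rightarrow> 'b::countable" and g1 g2 :: "('i \<Rightarrow> 'b) \<Rightarrow> real"
  assumes ind: "indep_vars (\<lambda>_. count_space UNIV) X I"
    and K1: "K1 \<subseteq> I" "finite K1" and K2: "K2 \<subseteq> I" "finite K2" and disj: "K1 \<inter> K2 = {}"
    and g1: "\<And>v. \<bar>g1 v\<bar> \<le> B" and g2: "\<And>v. \<bar>g2 v\<bar> \<le> B'"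
  shows "(\<integral>w. g1 (var_block X K1 w) * g2 (var_block X K2 w) \<partial>M)
       = (\<integral>w. g1 (var_block X K1 w) \<partial>M) * (\<integral>w. g2 (var_block X K2 w) \<partial>M)"
proof -
  have X: "X i \<in> measurable M (count_space UNIV)" if "i \<in> I" for i
    using ind that unfolding indep_vars_def by auto
  define K where "K b = (if b then K1 else K2)" for b
  have "indep_vars (\<lambda>b. PiM (K b) (\<lambda>_. count_space UNIV)) (\<lambda>b w. restrict (\<lambda>i. X i w) (K b)) UNIV"
    using K1 K2 disj
    by (intro indep_vars_restrict[OF ind]) (auto simp: K_def disjoint_family_on_def)
  then have "indep_var (PiM K1 (\<lambda>_. count_space UNIV)) (var_block X K1)
      (PiM K2 (\<lambda>_. count_space UNIV)) (var_block X K2)"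
    unfolding indep_var_def
    by (rule indep_vars_cong[THEN iffD1, rotated 3])
      (auto simp: K_def var_block_def fun_eq_iff split: bool.split)
  then have "indep_var borel (g1 \<circ> var_block X K1) borel (g2 \<circ> var_block X K2)"
    by (rule indep_var_compose[OF _ borel_measurable_PiM_count_space_finite[OF K1(2)]
          borel_measurable_PiM_count_space_finite[OF K2(2)]])
  moreover have "integrable M (g1 \<circ> var_block X K1)"
  proof -
    have "(\<lambda>w. g1 (var_block X K1 w)) \<in> borel_measurable M"
      using X K1 by (intro borel_measurable_var_block_comp) auto
    then show ?thesis
      using g1 by (intro integrable_const_bound[where B=B]) (auto simp: comp_def)
  qed
  moreover have "integrable M (g2 \<circ> var_block X K2)"
  proof -
    have "(\<lambda>w. g2 (var_block X K2 w)) \<in> borel_measurable M"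
      using X K2 by (intro borel_measurable_var_block_comp) auto
    then show ?thesis
      using g2 by (intro integrable_const_bound[where B=B']) (auto simp: comp_def)
  qed
  ultimately show ?thesis
    using indep_var_lebesgue_integral by (simp add: comp_def)
qed

lemma integral_of_bool_eq_measure:
  assumes "{w \<in> space M. P w} \<in> sets M"
  shows "(\<integral>w. of_bool (P w) \<partial>M) = measure M {w \<in> space M. P w}"
proof -
  have "(\<integral>w. of_bool (P w) \<partial>M) = (\<integral>w. indicator {w \<in> space M. P w} w \<partial>M)"
    by (intro Bochner_Integration.integral_cong) (auto simp: indicator_def)
  also have "\<dots> = measure M {w \<in> space M. P w}"
    using assms by simp
  finally show ?thesis .
qed

lemma integral_sq_sum_orthogonal:
  fixes Y :: "'i \<Rightarrow> 'a \<Rightarrow> real"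
  assumes I: "finite I"
    and Y: "\<And>x. x \<in> I \<Longrightarrow> Y x \<in> borel_measurable M"
    and Y_bound: "\<And>x w. x \<in> I \<Longrightarrow> \<bar>Y x w\<bar> \<le> B"
    and orth: "\<And>x y. x \<in> I \<Longrightarrow> y \<in> I \<Longrightarrow> x \<noteq> y \<Longrightarrow> (\<integral>w. Y x w * Y y w \<partial>M) = 0"
  shows "integrable M (\<lambda>w. (\<Sum>x\<in>I. Y x w)\<^sup>2)"
    and "(\<integral>w. (\<Sum>x\<in>I. Y x w)\<^sup>2 \<partial>M) = (\<integral>w. (\<Sum>x\<in>I. (Y x w)\<^sup>2) \<partial>M)"
proof -
  have prod_int: "integrable M (\<lambda>w. Y x w * Y y w)" if "x \<in> I" "y \<in> I" for x y
  proof (rule integrable_const_bound[where B="B * B"])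
    show "AE w in M. norm (Y x w * Y y w) \<le> B * B"
      using Y_bound[OF that(1)] Y_bound[OF that(2)]
      by (auto simp: abs_mult intro!: mult_mono AE_I2 order_trans[OF abs_ge_zero])
  qed (use Y that in measurable)
  have sq_sum: "(\<Sum>x\<in>I. Y x w)\<^sup>2 = (\<Sum>x\<in>I. \<Sum>y\<in>I. Y x w * Y y w)" for w
    by (simp add: power2_eq_square sum_product)
  show "integrable M (\<lambda>w. (\<Sum>x\<in>I. Y x w)\<^sup>2)"
    unfolding sq_sum using prod_int by (intro Bochner_Integration.integrable_sum) auto
  have "(\<integral>w. (\<Sum>x\<in>I. Y x w)\<^sup>2 \<partial>M) = (\<Sum>x\<in>I. \<Sum>y\<in>I. \<integral>w. Y x w * Y y w \<partial>M)"
    unfolding sq_sum using prod_int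
    by (simp add: Bochner_Integration.integral_sum Bochner_Integration.integrable_sum)
  also have "\<dots> = (\<Sum>x\<in>I. \<integral>w. Y x w * Y x w \<partial>M)"
  proof (rule sum.cong[OF refl])
    fix x assume x: "x \<in> I"
    have "(\<Sum>y\<in>I. \<integral>w. Y x w * Y y w \<partial>M)
        = (\<integral>w. Y x w * Y x w \<partial>M) + (\<Sum>y\<in>I - {x}. \<integral>w. Y x w * Y y w \<partial>M)"
      using I x by (simp add: sum.remove)
    also have "(\<Sum>y\<in>I - {x}. \<integral>w. Y x w * Y y w \<partial>M) = 0"
      using orth x by (intro sum.neutral) auto
    finally show "(\<Sum>y\<in>I. \<integral>w. Y x w * Y y w \<partial>M) = (\<integral>w. Y x w * Y x w \<partial>M)" by simp
  qed
  also have "\<dots> = (\<integral>w. (\<Sum>x\<in>I. (Y x w)\<^sup>2) \<partial>M)"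
    using prod_int by (simp add: Bochner_Integration.integral_sum power2_eq_square)
  finally show "(\<integral>w. (\<Sum>x\<in>I. Y x w)\<^sup>2 \<partial>M) = (\<integral>w. (\<Sum>x\<in>I. (Y x w)\<^sup>2) \<partial>M)" .
qed

lemma measure_abs_sum_ge_orthogonal:
  fixes Y :: "'i \<Rightarrow> 'a \<Rightarrow> real"
  assumes I: "finite I"
    and Y: "\<And>x. x \<in> I \<Longrightarrow> Y x \<in> borel_measurable M"
    and Y_bound: "\<And>x w. x \<in> I \<Longrightarrow> \<bar>Y x w\<bar> \<le> B"
    and orth: "\<And>x y. x \<in> I \<Longrightarrow> y \<in> I \<Longrightarrow> x \<noteq> y \<Longrightarrow> (\<integral>w. Y x w * Y y w \<partial>M) = 0"
    and sq: "\<And>w. (\<Sum>x\<in>I. (Y x w)\<^sup>2) \<le> c"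
    and a: "a > 0"
  shows "measure M {w \<in> space M. a \<le> \<bar>\<Sum>x\<in>I. Y x w\<bar>} \<le> c / a\<^sup>2"
proof -
  note second_moment = integral_sq_sum_orthogonal[OF I Y Y_bound orth]
  have "measure M {w \<in> space M. a \<le> \<bar>\<Sum>x\<in>I. Y x w\<bar>} \<le> (\<integral>w. (\<Sum>x\<in>I. Y x w)\<^sup>2 \<partial>M) / a\<^sup>2"
    using Y second_moment(1) a by (intro second_moment_method) auto
  also have "(\<integral>w. (\<Sum>x\<in>I. Y x w)\<^sup>2 \<partial>M) \<le> c"
  proof -
    have "integrable M (\<lambda>w. (Y x w)\<^sup>2)" if "x \<in> I" for x
    proof (rule integrable_const_bound[where B="B\<^sup>2"])
      have "\<bar>Y x w\<bar>\<^sup>2 \<le> B\<^sup>2" for w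
        using Y_bound[OF that] by (intro power_mono) auto
      then show "AE w in M. norm ((Y x w)\<^sup>2) \<le> B\<^sup>2"
        by simp
    qed (use Y that in measurable)
    then have "integrable M (\<lambda>w. \<Sum>x\<in>I. (Y x w)\<^sup>2)"
      by (intro Bochner_Integration.integrable_sum) auto
    then have "(\<integral>w. (\<Sum>x\<in>I. (Y x w)\<^sup>2) \<partial>M) \<le> (\<integral>w. c \<partial>M)"
      using sq by (intro integral_mono) auto
    then show ?thesis
      using second_moment(2) by (simp add: prob_space)
  qed
  then have "(\<integral>w. (\<Sum>x\<in>I. Y x w)\<^sup>2 \<partial>M) / a\<^sup>2 \<le> c / a\<^sup>2"
    by (simp add: divide_right_mono)
  finally show ?thesis .
qed

lemma integrable_of_nn_cond_exp_sq_le: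
  fixes X :: "'a \<Rightarrow> nat"
  assumes F: "subalgebra M F" and X: "X \<in> measurable M (count_space UNIV)"
    and moment: "AE w in M. nn_cond_exp M F (\<lambda>w. ennreal ((real (X w))\<^sup>2)) w \<le> ennreal B"
  shows "integrable M (\<lambda>w. real (X w))"
proof -
  interpret finite_measure_subalgebra M F
    by unfold_locales (rule F)
  have [measurable]: "(\<lambda>w. real (X w)) \<in> borel_measurable M"
    using measurable_compose[OF X, of "\<lambda>n. real n" borel] by simp
  have "real n \<le> (real n)\<^sup>2" for n :: nat
    by (cases n) (auto simp: power2_eq_square)
  then have "(\<integral>\<^sup>+ w. ennreal (norm (real (X w))) \<partial>M) \<le> (\<integral>\<^sup>+ w. ennreal ((real (X w))\<^sup>2) \<partial>M)"
    by (intro nn_integral_mono ennreal_leI) simp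
  also have "\<dots> = (\<integral>\<^sup>+ w. 1 * nn_cond_exp M F (\<lambda>w. ennreal ((real (X w))\<^sup>2)) w \<partial>M)"
    by (subst nn_cond_exp_intg) auto
  also have "\<dots> \<le> (\<integral>\<^sup>+ w. ennreal B \<partial>M)"
    using moment by (intro nn_integral_mono_AE) auto
  also have "\<dots> < \<infinity>"
    by (simp add: emeasure_space_1)
  finally show ?thesis
    by (simp add: integrable_iff_bounded)
qed

lemma tail_prob_tendsto_0:
  fixes X :: "'a \<Rightarrow> nat"
  assumes int: "integrable M (\<lambda>w. real (X w))"
  shows "((\<lambda>V. measure M {w \<in> space M. V < real (X w)}) \<longlongrightarrow> 0) at_top"
proof (rule tendsto_sandwich[OF _ _ tendsto_const])
  show "\<forall>\<^sub>F V in at_top. 0 \<le> measure M {w \<in> space M. V < real (X w)}"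
    by simp
  show "\<forall>\<^sub>F V in at_top. measure M {w \<in> space M. V < real (X w)} \<le> (\<integral>w. real (X w) \<partial>M) / V"
    using eventually_gt_at_top[of "0::real"]
  proof eventually_elim
    case (elim V)
    have "measure M {w \<in> space M. V < real (X w)} \<le> measure M {w \<in> space M. V \<le> real (X w)}"
      using int by (intro finite_measure_mono) auto
    also have "\<dots> \<le> (\<integral>w. real (X w) \<partial>M) / V"
      using int elim by (intro integral_Markov_inequality_measure) auto
    finally show ?case .
  qed
  show "((\<lambda>V. (\<integral>w. real (X w) \<partial>M) / V) \<longlongrightarrow> 0) at_top"
    by (intro tendsto_divide_0[OF tendsto_const] filterlim_at_top_imp_at_infinity filterlim_ident)
qed

end

section \<open>Cesaro means\<close>

lemma cesaro_mean_tendsto_0: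
  fixes e :: "nat \<Rightarrow> real"
  assumes e: "e \<longlonglongrightarrow> 0"
  shows "(\<lambda>t. (1 / real t) * (\<Sum>\<tau><t. e \<tau>)) \<longlonglongrightarrow> 0"
proof (rule LIMSEQ_I)
  fix r :: real assume r: "r > 0"
  obtain N where N: "\<And>n. n \<ge> N \<Longrightarrow> norm (e n) < r / 2"
    using LIMSEQ_D[OF e, of "r / 2"] r by auto
  define B where "B = (\<Sum>\<tau><N. \<bar>e \<tau>\<bar>)"
  obtain N' :: nat where N': "real N' > 2 * B / r"
    using reals_Archimedean2 by blast
  show "\<exists>n0. \<forall>n\<ge>n0. norm ((1 / real n) * (\<Sum>\<tau><n. e \<tau>) - 0) < r"
  proof (intro exI allI impI)
    fix n assume n: "n \<ge> N + N' + 1"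
    have "(\<Sum>\<tau><n. e \<tau>) = (\<Sum>\<tau><N. e \<tau>) + (\<Sum>\<tau>\<in>{N..<n}. e \<tau>)"
      using n sum.atLeastLessThan_concat[of 0 N n e] by (simp add: atLeast0LessThan)
    moreover have "\<bar>\<Sum>\<tau><N. e \<tau>\<bar> \<le> B"
      unfolding B_def by (rule sum_abs)
    moreover have "\<bar>\<Sum>\<tau>\<in>{N..<n}. e \<tau>\<bar> \<le> (\<Sum>\<tau>\<in>{N..<n}. r / 2)"
      using N by (intro order.trans[OF sum_abs] sum_mono) (auto intro: less_imp_le)
    moreover have "(\<Sum>\<tau>\<in>{N..<n}. r / 2) \<le> real n * (r / 2)"
      using r by simp
    moreover have "B < real n * (r / 2)"
    proof -
      have "2 * B / r < real n" using N' n by linarith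
      then show ?thesis using r by (simp add: field_simps)
    qed
    ultimately have "\<bar>\<Sum>\<tau><n. e \<tau>\<bar> < real n * r"
      by linarith
    then show "norm ((1 / real n) * (\<Sum>\<tau><n. e \<tau>) - 0) < r"
      using n by (simp add: abs_mult field_simps)
  qed
qed

lemma limsup_cesaro_mean_le:
  fixes u e :: "nat \<Rightarrow> real"
  assumes u_le: "\<And>t. u t \<le> e t + h" and e: "e \<longlonglongrightarrow> 0" and h: "0 \<le> h"
  shows "limsup (\<lambda>t. ereal ((1 / real t) * (\<Sum>\<tau><t. u \<tau>))) \<le> ereal h"
proof -
  define c where "c t = (1 / real t) * (\<Sum>\<tau><t. e \<tau>)" for t
  have "(1 / real t) * (\<Sum>\<tau><t. u \<tau>) \<le> c t + h" for t
  proof (cases "t = 0")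
    case True
    then show ?thesis using h by (simp add: c_def)
  next
    case False
    have "(1 / real t) * (\<Sum>\<tau><t. u \<tau>) \<le> (1 / real t) * (\<Sum>\<tau><t. e \<tau> + h)"
      using u_le by (intro mult_left_mono sum_mono) auto
    also have "\<dots> = c t + h"
      using False by (simp add: c_def sum.distrib field_simps)
    finally show ?thesis .
  qed
  then have "limsup (\<lambda>t. ereal ((1 / real t) * (\<Sum>\<tau><t. u \<tau>))) \<le> limsup (\<lambda>t. ereal (c t + h))"
    by (intro Limsup_mono always_eventually) auto
  also have "limsup (\<lambda>t. ereal (c t + h)) = ereal h"
  proof (rule lim_imp_Limsup)
    have "(\<lambda>t. c t + h) \<longlonglongrightarrow> 0 + h"
      unfolding c_def by (intro tendsto_intros cesaro_mean_tendsto_0[OF e])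
    then show "(\<lambda>t. ereal (c t + h)) \<longlonglongrightarrow> ereal h" by simp
  qed simp
  finally show ?thesis .
qed

lemma limsup_cesaro_mean_tendsto_0:
  fixes u :: "real \<Rightarrow> nat \<Rightarrow> real" and e :: "nat \<Rightarrow> real" and h :: "real \<Rightarrow> real"
  assumes u_nonneg: "\<And>V t. 0 \<le> u V t"
    and u_le: "\<And>V t. V \<ge> 0 \<Longrightarrow> u V t \<le> e t + h V"
    and e: "e \<longlonglongrightarrow> 0" and h_nonneg: "\<And>V. 0 \<le> h V" and h: "(h \<longlongrightarrow> 0) at_top"
  shows "((\<lambda>V. limsup (\<lambda>t. ereal ((1 / real t) * (\<Sum>\<tau><t. u V \<tau>)))) \<longlongrightarrow> 0) at_top"
proof (rule tendsto_sandwich[where f="\<lambda>_. 0" and h="\<lambda>V. ereal (h V)"])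
  show "\<forall>\<^sub>F V in at_top. 0 \<le> limsup (\<lambda>t. ereal ((1 / real t) * (\<Sum>\<tau><t. u V \<tau>)))"
    by (intro always_eventually allI le_Limsup) (simp_all add: sum_nonneg u_nonneg)
  show "\<forall>\<^sub>F V in at_top. limsup (\<lambda>t. ereal ((1 / real t) * (\<Sum>\<tau><t. u V \<tau>))) \<le> ereal (h V)"
    using eventually_ge_at_top[of "0::real"]
    by eventually_elim (rule limsup_cesaro_mean_le[OF u_le e h_nonneg])
  show "((\<lambda>V. ereal (h V)) \<longlongrightarrow> 0) at_top"
    using h unfolding zero_ereal_def by (simp only: lim_ereal)
qed simp

section \<open>Upper deviations of stationary ergodic sums\<close>

lemma space_nat_seq_space [simp]: "space nat_seq_space = UNIV"
  by (simp add: nat_seq_space_def space_PiM)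

lemma measurable_nat_seq_coord [measurable]:
  "(\<lambda>\<omega>. \<omega> j) \<in> measurable nat_seq_space (count_space UNIV)"
  unfolding nat_seq_space_def by (rule measurable_component_singleton) simp

lemma measurable_nat_seq_space:
  assumes "\<And>t. X t \<in> measurable M (count_space UNIV)"
  shows "(\<lambda>w t. X t w) \<in> measurable M nat_seq_space"
  unfolding nat_seq_space_def by (rule measurable_PiM_single') (auto simp: assms)

lemma stationary_integral_shift:
  fixes g :: "(nat \<Rightarrow> nat) \<Rightarrow> real"
  assumes stat: "stationary_process M X" and X: "\<And>t. X t \<in> measurable M (count_space UNIV)"
    and g: "g \<in> borel_measurable nat_seq_space"
  shows "(\<integral>w. g (\<lambda>t. X (t + k) w) \<partial>M) = (\<integral>w. g (\<lambda>t. X t w) \<partial>M)"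
    and "integrable M (\<lambda>w. g (\<lambda>t. X (t + k) w)) \<longleftrightarrow> integrable M (\<lambda>w. g (\<lambda>t. X t w))"
proof -
  have m0: "(\<lambda>w t. X t w) \<in> measurable M nat_seq_space"
    by (rule measurable_nat_seq_space[OF X])
  have mk: "(\<lambda>w t. X (t + k) w) \<in> measurable M nat_seq_space"
    by (rule measurable_nat_seq_space[OF X])
  have distr_eq: "distr M nat_seq_space (\<lambda>w t. X (t + k) w) = distr M nat_seq_space (\<lambda>w t. X t w)"
    using stat unfolding stationary_process_def by simp
  show "(\<integral>w. g (\<lambda>t. X (t + k) w) \<partial>M) = (\<integral>w. g (\<lambda>t. X t w) \<partial>M)"
    using integral_distr[OF mk g] integral_distr[OF m0 g] distr_eq by simp
  show "integrable M (\<lambda>w. g (\<lambda>t. X (t + k) w)) \<longleftrightarrow> integrable M (\<lambda>w. g (\<lambda>t. X t w))"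
    using integrable_distr_eq[OF mk g] integrable_distr_eq[OF m0 g] distr_eq by simp
qed

lemma stationary_measure_shift:
  assumes stat: "stationary_process M X" and X: "\<And>t. X t \<in> measurable M (count_space UNIV)"
    and B: "B \<in> sets nat_seq_space"
  shows "measure M {w \<in> space M. (\<lambda>t. X (t + k) w) \<in> B} = measure M {w \<in> space M. (\<lambda>t. X t w) \<in> B}"
proof -
  have m0: "(\<lambda>w t. X t w) \<in> measurable M nat_seq_space"
    by (rule measurable_nat_seq_space[OF X])
  have mk: "(\<lambda>w t. X (t + k) w) \<in> measurable M nat_seq_space"
    by (rule measurable_nat_seq_space[OF X])
  have distr_eq: "distr M nat_seq_space (\<lambda>w t. X (t + k) w) = distr M nat_seq_space (\<lambda>w t. X t w)"
    using stat unfolding stationary_process_def by simp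
  have "measure (distr M nat_seq_space f) B = measure M {w \<in> space M. f w \<in> B}"
    if "f \<in> measurable M nat_seq_space" for f
  proof -
    have "f -` B \<inter> space M = {w \<in> space M. f w \<in> B}" by auto
    then show ?thesis using measure_distr[OF that B] by simp
  qed
  from this[OF mk] this[OF m0] distr_eq show ?thesis by simp
qed

lemma stationary_tail_shift:
  assumes stat: "stationary_process M X" and X: "\<And>t. X t \<in> measurable M (count_space UNIV)"
  shows "measure M {w \<in> space M. V < real (X t w)} = measure M {w \<in> space M. V < real (X 0 w)}"
proof -
  have "{\<omega> \<in> space nat_seq_space. V < real (\<omega> 0)} \<in> sets nat_seq_space"
    by measurable
  then have "{\<omega>. V < real (\<omega> 0)} \<in> sets nat_seq_space"
    by simp
  from stationary_measure_shift[OF stat X this, of t] show ?thesis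
    by simp
qed

definition seq_sum :: "nat \<Rightarrow> (nat \<Rightarrow> nat) \<Rightarrow> real" where
  "seq_sum n \<omega> = (\<Sum>j<n. real (\<omega> j))"

text \<open>\<open>\<omega> \<in> avg_exceeds r\<close> says that \<open>limsup (seq_sum n \<omega> / n) > r\<close>, written without
  limits so that measurability is automatic.\<close>

definition avg_exceeds :: "real \<Rightarrow> (nat \<Rightarrow> nat) set" where
  "avg_exceeds r = {\<omega>. \<exists>m::nat. \<forall>N. \<exists>n\<ge>N. real n * (r + 1 / (real m + 1)) \<le> seq_sum n \<omega>}"

lemma seq_sum_Suc_shift: "seq_sum (Suc n) \<omega> = real (\<omega> 0) + seq_sum n (\<lambda>t. \<omega> (Suc t))"
  unfolding seq_sum_def by (subst sum.lessThan_Suc_shift) simp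

lemma sets_avg_exceeds: "avg_exceeds r \<in> sets nat_seq_space"
proof -
  have "{\<omega> \<in> space nat_seq_space. \<exists>m::nat. \<forall>N::nat. \<exists>n\<ge>N.
      real n * (r + 1 / (real m + 1)) \<le> (\<Sum>j<n. real (\<omega> j))} \<in> sets nat_seq_space"
    by measurable
  then show ?thesis by (simp add: avg_exceeds_def seq_sum_def)
qed

lemma avg_exceeds_of_shift:
  assumes r: "r \<ge> 0" and shift: "(\<lambda>t. \<omega> (Suc t)) \<in> avg_exceeds r"
  shows "\<omega> \<in> avg_exceeds r"
proof -
  obtain m where m: "\<And>N. \<exists>n\<ge>N. real n * (r + 1 / (real m + 1)) \<le> seq_sum n (\<lambda>t. \<omega> (Suc t))"
    using shift unfolding avg_exceeds_def by blast
  define a where "a = 1 / (real m + 1)"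
  have a: "a > 0" and a_half: "1 / (real (2 * m + 1) + 1) = a / 2"
    unfolding a_def by (simp_all add: field_simps)
  have "\<exists>n\<ge>N. real n * (r + a / 2) \<le> seq_sum n \<omega>" for N
  proof -
    obtain K :: nat where K: "real K \<ge> 2 * r / a + 1"
      using real_arch_simple by blast
    obtain n where n: "n \<ge> N + K" "real n * (r + a) \<le> seq_sum n (\<lambda>t. \<omega> (Suc t))"
      using m[of "N + K"] unfolding a_def by blast
    have "(2 * r / a + 1) * a \<le> real n * a"
      using K n(1) a by (intro mult_right_mono) auto
    moreover have "(2 * r / a + 1) * a = 2 * r + a"
      using a by (simp add: field_simps)
    ultimately have "2 * r + a \<le> real n * a"
      by simp
    then have "real (Suc n) * (r + a / 2) \<le> real n * (r + a)"
      by (simp add: field_simps; linarith)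
    also have "\<dots> \<le> seq_sum (Suc n) \<omega>"
      using n(2) seq_sum_Suc_shift[of n \<omega>] by simp
    finally show ?thesis
      using n(1) by (intro exI[of _ "Suc n"]) auto
  qed
  then have "\<forall>N. \<exists>n\<ge>N. real n * (r + 1 / (real (2 * m + 1) + 1)) \<le> seq_sum n \<omega>"
    unfolding a_half by blast
  then show ?thesis
    unfolding avg_exceeds_def by blast
qed

lemma shift_in_avg_exceeds:
  assumes r: "r \<ge> 0" and "\<omega> \<in> avg_exceeds r"
  shows "(\<lambda>t. \<omega> (Suc t)) \<in> avg_exceeds r"
proof -
  obtain m where m: "\<And>N. \<exists>n\<ge>N. real n * (r + 1 / (real m + 1)) \<le> seq_sum n \<omega>"
    using assms(2) unfolding avg_exceeds_def by blast
  define a where "a = 1 / (real m + 1)"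
  have a: "a > 0" and a_half: "1 / (real (2 * m + 1) + 1) = a / 2"
    unfolding a_def by (simp_all add: field_simps)
  have "\<exists>n\<ge>N. real n * (r + a / 2) \<le> seq_sum n (\<lambda>t. \<omega> (Suc t))" for N
  proof -
    obtain K :: nat where K: "real K \<ge> 2 * real (\<omega> 0) / a"
      using real_arch_simple by blast
    obtain n' where n': "n' \<ge> Suc N + K" "real n' * (r + a) \<le> seq_sum n' \<omega>"
      using m[of "Suc N + K"] unfolding a_def by blast
    then obtain n where n: "n' = Suc n" "n \<ge> N"
      by (cases n') auto
    have "(2 * real (\<omega> 0) / a) * a \<le> real n' * a"
      using K n'(1) a by (intro mult_right_mono) auto
    then have "2 * real (\<omega> 0) \<le> real n' * a"
      using a by simp
    then have "real n * (r + a / 2) \<le> real n' * (r + a) - real (\<omega> 0)"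
      using r a n(1) by (simp add: algebra_simps)
    also have "\<dots> \<le> seq_sum n (\<lambda>t. \<omega> (Suc t))"
      using n'(2) seq_sum_Suc_shift[of n \<omega>] n(1) by simp
    finally show ?thesis
      using n(2) by blast
  qed
  then have "\<forall>N. \<exists>n\<ge>N. real n * (r + 1 / (real (2 * m + 1) + 1)) \<le> seq_sum n (\<lambda>t. \<omega> (Suc t))"
    unfolding a_half by blast
  then show ?thesis
    unfolding avg_exceeds_def by blast
qed

lemma avg_exceeds_shift_iff:
  "r \<ge> 0 \<Longrightarrow> (\<lambda>t. \<omega> (Suc t)) \<in> avg_exceeds r \<longleftrightarrow> \<omega> \<in> avg_exceeds r"
  using avg_exceeds_of_shift shift_in_avg_exceeds by blast

text \<open>Greedy covering of \<open>[0, L)\<close> by blocks of length at most \<open>N\<close> and average at least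
  \<open>r\<close>: only the last, incomplete block is lost.\<close>

lemma sum_ge_by_short_blocks:
  fixes x :: "nat \<Rightarrow> real"
  assumes r: "r \<ge> 0" and x_nonneg: "\<And>k. x k \<ge> 0"
    and blocks: "\<And>k. x k \<ge> r \<or> (\<exists>n. 1 \<le> n \<and> n \<le> N \<and> real n * r \<le> (\<Sum>j<n. x (k + j)))"
  shows "(real L - real N) * r \<le> (\<Sum>k<L. x k)"
proof -
  have "(real L - real s - real N) * r \<le> (\<Sum>k\<in>{s..<L}. x k)" if "s \<le> L" for s
    using that
  proof (induction "L - s" arbitrary: s rule: less_induct)
    case less
    show ?case
    proof (cases "s = L")
      case True
      then show ?thesis using r by (simp add: mult_nonpos_nonneg)
    next
      case False
      with less.prems have s: "s < L" by simp
      have "\<exists>n. 1 \<le> n \<and> real n * r \<le> (\<Sum>j<n. x (s + j)) \<and> (s + n \<le> L \<or> n \<le> N)"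
      proof (cases "x s \<ge> r")
        case True
        then show ?thesis using s by (intro exI[of _ 1]) auto
      next
        case False
        then show ?thesis using blocks[of s] by auto
      qed
      then obtain n where n: "1 \<le> n" "real n * r \<le> (\<Sum>j<n. x (s + j))" "s + n \<le> L \<or> n \<le> N"
        by blast
      show ?thesis
      proof (cases "s + n \<le> L")
        case True
        have "(\<Sum>k\<in>{s..<L}. x k) = (\<Sum>k\<in>{s..<s + n}. x k) + (\<Sum>k\<in>{s + n..<L}. x k)"
          using True by (simp add: sum.atLeastLessThan_concat)
        moreover have "(\<Sum>k\<in>{s..<s + n}. x k) = (\<Sum>j<n. x (s + j))"
          by (rule sum.reindex_bij_witness[of _ "\<lambda>j. s + j" "\<lambda>k. k - s"]) auto
        moreover have "(real L - real (s + n) - real N) * r \<le> (\<Sum>k\<in>{s + n..<L}. x k)"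
          using less.hyps[of "s + n"] True n(1) by simp
        ultimately show ?thesis
          using n(2) by (simp add: algebra_simps)
      next
        case False
        then have "(real L - real s - real N) * r \<le> 0"
          using n(3) r by (intro mult_nonpos_nonneg) auto
        also have "0 \<le> (\<Sum>k\<in>{s..<L}. x k)"
          using x_nonneg by (simp add: sum_nonneg)
        finally show ?thesis .
      qed
    qed
  qed
  from this[of 0] show ?thesis
    by (simp add: atLeast0LessThan)
qed

definition heavy_prefix :: "real \<Rightarrow> nat \<Rightarrow> (nat \<Rightarrow> nat) \<Rightarrow> bool" where
  "heavy_prefix r N \<omega> \<longleftrightarrow> (\<exists>n. 1 \<le> n \<and> n \<le> N \<and> real n * r \<le> seq_sum n \<omega>)"

definition cover_weight :: "real \<Rightarrow> nat \<Rightarrow> (nat \<Rightarrow> nat) \<Rightarrow> real" where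
  "cover_weight r N \<omega> = real (\<omega> 0) + r * of_bool (\<not> heavy_prefix r N \<omega>)"

lemma pred_heavy_prefix [measurable]: "Measurable.pred nat_seq_space (heavy_prefix r N)"
  unfolding heavy_prefix_def seq_sum_def by measurable

lemma borel_measurable_cover_weight [measurable]:
  "cover_weight r N \<in> borel_measurable nat_seq_space"
  unfolding cover_weight_def by measurable

lemma sum_cover_weight_ge:
  assumes r: "r \<ge> 0"
  shows "(real L - real N) * r \<le> (\<Sum>k<L. cover_weight r N (\<lambda>t. \<omega> (t + k)))"
proof (rule sum_ge_by_short_blocks[OF r])
  show "0 \<le> cover_weight r N (\<lambda>t. \<omega> (t + k))" for k
    unfolding cover_weight_def using r by simp
  fix k
  show "r \<le> cover_weight r N (\<lambda>t. \<omega> (t + k)) \<or> (\<exists>n. 1 \<le> n \<and> n \<le> N \<and>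
      real n * r \<le> (\<Sum>j<n. cover_weight r N (\<lambda>t. \<omega> (t + (k + j)))))"
  proof (cases "heavy_prefix r N (\<lambda>t. \<omega> (t + k))")
    case False
    then show ?thesis unfolding cover_weight_def by simp
  next
    case True
    then obtain n where n: "1 \<le> n" "n \<le> N" "real n * r \<le> seq_sum n (\<lambda>t. \<omega> (t + k))"
      unfolding heavy_prefix_def by blast
    have "seq_sum n (\<lambda>t. \<omega> (t + k)) \<le> (\<Sum>j<n. cover_weight r N (\<lambda>t. \<omega> (t + (k + j))))"
      unfolding seq_sum_def cover_weight_def using r by (intro sum_mono) (simp add: add.commute)
    then show ?thesis
      using n by (intro disjI2 exI[of _ n]) simp
  qed
qed

lemma stationary_cover_weight:
  assumes M: "prob_space M" and X: "\<And>t. X t \<in> measurable M (count_space UNIV)"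
    and stat: "stationary_process M X" and int: "integrable M (\<lambda>w. real (X 0 w))"
  shows "integrable M (\<lambda>w. cover_weight r N (\<lambda>t. X (t + k) w))"
    and "(\<integral>w. cover_weight r N (\<lambda>t. X (t + k) w) \<partial>M) = prob_space.expectation M (\<lambda>w. real (X 0 w))
      + r * measure M {w \<in> space M. \<not> heavy_prefix r N (\<lambda>t. X t w)}"
proof -
  interpret prob_space M by (rule M)
  define G where "G = {w \<in> space M. \<not> heavy_prefix r N (\<lambda>t. X t w)}"
  have [measurable]: "(\<lambda>w t. X t w) \<in> measurable M nat_seq_space"
    by (rule measurable_nat_seq_space[OF X])
  have G: "G \<in> sets M"
    unfolding G_def by measurable
  have weight_eq: "cover_weight r N (\<lambda>t. X t w) = real (X 0 w) + r * indicator G w"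
    if "w \<in> space M" for w
    using that unfolding cover_weight_def G_def by (simp split: split_indicator)
  have int_G: "integrable M (\<lambda>w. real (X 0 w) + r * indicator G w)"
    using int G by (intro Bochner_Integration.integrable_add integrable_mult_right integrable_real_indicator)
      (simp_all add: less_top[symmetric])
  have "integrable M (\<lambda>w. cover_weight r N (\<lambda>t. X t w))"
    using int_G Bochner_Integration.integrable_cong[where f="\<lambda>w. cover_weight r N (\<lambda>t. X t w)",
        OF refl weight_eq] by blast
  then show "integrable M (\<lambda>w. cover_weight r N (\<lambda>t. X (t + k) w))"
    using stationary_integral_shift(2)[OF stat X borel_measurable_cover_weight] by blast
  have "(\<integral>w. cover_weight r N (\<lambda>t. X (t + k) w) \<partial>M) = (\<integral>w. real (X 0 w) + r * indicator G w \<partial>M)"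
    unfolding stationary_integral_shift(1)[OF stat X borel_measurable_cover_weight]
    by (rule Bochner_Integration.integral_cong[OF refl weight_eq])
  also have "\<dots> = (\<integral>w. real (X 0 w) \<partial>M) + (\<integral>w. r * indicator G w \<partial>M)"
    using int G by (intro Bochner_Integration.integral_add integrable_mult_right integrable_real_indicator)
      (simp_all add: less_top[symmetric])
  also have "(\<integral>w. r * indicator G w \<partial>M) = r * measure M G"
    using G by simp
  finally show "(\<integral>w. cover_weight r N (\<lambda>t. X (t + k) w) \<partial>M) = expectation (\<lambda>w. real (X 0 w))
      + r * measure M {w \<in> space M. \<not> heavy_prefix r N (\<lambda>t. X t w)}"
    unfolding G_def .
qed

lemma stationary_heavy_prefix_bound:
  assumes M: "prob_space M" and X: "\<And>t. X t \<in> measurable M (count_space UNIV)"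
    and stat: "stationary_process M X" and int: "integrable M (\<lambda>w. real (X 0 w))"
    and r: "r \<ge> 0"
  shows "r \<le> prob_space.expectation M (\<lambda>w. real (X 0 w))
      + r * measure M {w \<in> space M. \<not> heavy_prefix r N (\<lambda>t. X t w)}"
    (is "r \<le> ?c")
proof (rule ccontr)
  interpret prob_space M by (rule M)
  note weight = stationary_cover_weight[OF M X stat int, of r N]
  have bound: "(real L - real N) * r \<le> real L * ?c" for L
  proof -
    have "(real L - real N) * r = (\<integral>w. (real L - real N) * r \<partial>M)"
      by (simp add: prob_space)
    also have "\<dots> \<le> (\<integral>w. (\<Sum>k<L. cover_weight r N (\<lambda>t. X (t + k) w)) \<partial>M)"
      using weight(1) sum_cover_weight_ge[OF r]
      by (intro integral_mono Bochner_Integration.integrable_sum integrable_const) auto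
    also have "\<dots> = real L * ?c"
      using weight by (simp add: Bochner_Integration.integral_sum)
    finally show ?thesis .
  qed
  assume "\<not> r \<le> ?c"
  then have gap: "r - ?c > 0"
    by simp
  obtain L :: nat where "real L > real N * r / (r - ?c)"
    using reals_Archimedean2 by blast
  then have "real L * (r - ?c) > real N * r"
    using gap by (simp add: field_simps)
  then show False
    using bound[of L] by (simp add: algebra_simps)
qed

lemma heavy_prefix_of_avg_exceeds:
  assumes "\<omega> \<in> avg_exceeds r"
  obtains N where "heavy_prefix r N \<omega>"
proof -
  obtain m where "\<forall>N. \<exists>n\<ge>N. real n * (r + 1 / (real m + 1)) \<le> seq_sum n \<omega>"
    using assms unfolding avg_exceeds_def by blast
  then obtain n where n: "n \<ge> 1" "real n * (r + 1 / (real m + 1)) \<le> seq_sum n \<omega>"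
    by blast
  have "real n * r \<le> real n * (r + 1 / (real m + 1))"
    by (intro mult_left_mono) auto
  with n(2) have "real n * r \<le> seq_sum n \<omega>"
    by linarith
  with n(1) have "heavy_prefix r n \<omega>"
    unfolding heavy_prefix_def by (intro exI[of _ n]) simp
  then show ?thesis ..
qed

lemma ergodic_avg_exceeds_0_1:
  assumes "ergodic_process M X" "r \<ge> 0"
  shows "measure M {w \<in> space M. (\<lambda>t. X t w) \<in> avg_exceeds r} \<in> {0, 1}"
proof -
  have "\<forall>f. (\<lambda>t. f (Suc t)) \<in> avg_exceeds r \<longleftrightarrow> f \<in> avg_exceeds r"
    using avg_exceeds_shift_iff assms(2) by simp
  then show ?thesis
    using assms(1) sets_avg_exceeds unfolding ergodic_process_def by blast
qed

lemma ergodic_avg_exceeds_null: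
  assumes M: "prob_space M" and X: "\<And>t. X t \<in> measurable M (count_space UNIV)"
    and stat: "stationary_process M X" and erg: "ergodic_process M X"
    and int: "integrable M (\<lambda>w. real (X 0 w))"
    and r: "r > prob_space.expectation M (\<lambda>w. real (X 0 w))"
  shows "measure M {w \<in> space M. (\<lambda>t. X t w) \<in> avg_exceeds r} = 0"
proof -
  interpret prob_space M by (rule M)
  have [measurable]: "(\<lambda>w t. X t w) \<in> measurable M nat_seq_space"
    by (rule measurable_nat_seq_space[OF X])
  have "0 \<le> expectation (\<lambda>w. real (X 0 w))"
    by (rule integral_nonneg_AE) auto
  with r have r_pos: "r > 0" by linarith
  define E where "E = {w \<in> space M. (\<lambda>t. X t w) \<in> avg_exceeds r}"
  define G where "G N = {w \<in> space M. \<not> heavy_prefix r N (\<lambda>t. X t w)}" for N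
  have E: "E \<in> sets M"
    unfolding E_def using sets_avg_exceeds by measurable
  have G: "G N \<in> sets M" for N
    unfolding G_def by measurable
  have "measure M E \<noteq> 1"
  proof
    assume one: "measure M E = 1"
    have "(\<Inter>N. G N) \<subseteq> space M - E"
      unfolding G_def E_def by (auto elim: heavy_prefix_of_avg_exceeds)
    then have "measure M (\<Inter>N. G N) \<le> measure M (space M - E)"
      using E by (intro finite_measure_mono) auto
    also have "\<dots> = 0"
      using prob_compl[OF E] one by simp
    finally have "measure M (\<Inter>N. G N) = 0"
      by (simp add: order.antisym)
    moreover have "decseq G"
      by (rule decseq_SucI) (auto simp: G_def heavy_prefix_def)
    ultimately have "(\<lambda>N. measure M (G N)) \<longlonglongrightarrow> 0"
      using finite_Lim_measure_decseq[of G] G by auto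
    then have "(\<lambda>N. expectation (\<lambda>w. real (X 0 w)) + r * measure M (G N))
        \<longlonglongrightarrow> expectation (\<lambda>w. real (X 0 w)) + r * 0"
      by (intro tendsto_intros)
    moreover have "r \<le> expectation (\<lambda>w. real (X 0 w)) + r * measure M (G N)" for N
      unfolding G_def by (rule stationary_heavy_prefix_bound[OF M X stat int less_imp_le[OF r_pos]])
    ultimately have "r \<le> expectation (\<lambda>w. real (X 0 w))"
      by (intro LIMSEQ_le_const) auto
    with r show False by simp
  qed
  with ergodic_avg_exceeds_0_1[OF erg less_imp_le[OF r_pos]] show ?thesis
    unfolding E_def by simp
qed

lemma avg_exceeds_of_frequently_above:
  assumes \<delta>: "\<delta> > 0" and above: "\<forall>N. \<exists>n\<ge>N. real n * (lam + \<delta>) \<le> seq_sum n \<omega>"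
  shows "\<omega> \<in> avg_exceeds (lam + \<delta> / 2)"
proof -
  obtain m :: nat where "2 / \<delta> \<le> real m"
    using real_arch_simple by blast
  then have m: "1 / (real m + 1) \<le> \<delta> / 2"
    using \<delta> by (simp add: field_simps)
  have "\<exists>n\<ge>N. real n * (lam + \<delta> / 2 + 1 / (real m + 1)) \<le> seq_sum n \<omega>" for N
  proof -
    from above obtain n where n: "n \<ge> N" "real n * (lam + \<delta>) \<le> seq_sum n \<omega>"
      by blast
    have "real n * (lam + \<delta> / 2 + 1 / (real m + 1)) \<le> real n * (lam + \<delta>)"
      using m by (intro mult_left_mono) auto
    with n show ?thesis by auto
  qed
  then show ?thesis
    unfolding avg_exceeds_def by blast
qed

theorem ergodic_sum_upper_deviation:
  assumes M: "prob_space M" and X: "\<And>t. X t \<in> measurable M (count_space UNIV)"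
    and stat: "stationary_process M X" and erg: "ergodic_process M X"
    and int: "integrable M (\<lambda>w. real (X 0 w))" and \<delta>: "\<delta> > 0"
  shows "(\<lambda>n. measure M {w \<in> space M. real n * (prob_space.expectation M (\<lambda>w. real (X 0 w)) + \<delta>)
      \<le> (\<Sum>t<n. real (X t w))}) \<longlonglongrightarrow> 0"
proof -
  interpret prob_space M by (rule M)
  define lam where "lam = expectation (\<lambda>w. real (X 0 w))"
  have [measurable]: "(\<lambda>w t. X t w) \<in> measurable M nat_seq_space"
    by (rule measurable_nat_seq_space[OF X])
  define D where "D n = {w \<in> space M. \<exists>m\<ge>n. real m * (lam + \<delta>) \<le> seq_sum m (\<lambda>t. X t w)}" for n
  have D: "D n \<in> sets M" for n
  proof -
    have "{w \<in> space M. \<exists>m\<ge>n. real m * (lam + \<delta>) \<le> (\<Sum>j<m. real (X j w))} \<in> sets M"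
      by measurable
    then show ?thesis unfolding D_def seq_sum_def .
  qed
  have "(\<Inter>n. D n) \<subseteq> {w \<in> space M. (\<lambda>t. X t w) \<in> avg_exceeds (lam + \<delta> / 2)}"
    unfolding D_def using avg_exceeds_of_frequently_above[OF \<delta>] by blast
  moreover have "{w \<in> space M. (\<lambda>t. X t w) \<in> avg_exceeds (lam + \<delta> / 2)} \<in> sets M"
    using sets_avg_exceeds by measurable
  ultimately have "measure M (\<Inter>n. D n)
      \<le> measure M {w \<in> space M. (\<lambda>t. X t w) \<in> avg_exceeds (lam + \<delta> / 2)}"
    by (rule finite_measure_mono)
  also have "\<dots> = 0"
    using \<delta> unfolding lam_def by (intro ergodic_avg_exceeds_null[OF M X stat erg int]) simp
  finally have "measure M (\<Inter>n. D n) = 0"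
    by (simp add: order.antisym)
  moreover have "decseq D"
    by (rule decseq_SucI) (unfold D_def, blast dest: Suc_leD)
  ultimately have D_lim: "(\<lambda>n. measure M (D n)) \<longlonglongrightarrow> 0"
    using finite_Lim_measure_decseq[of D] D by auto
  have "measure M {w \<in> space M. real n * (lam + \<delta>) \<le> (\<Sum>t<n. real (X t w))} \<le> measure M (D n)" for n
    by (rule finite_measure_mono[OF _ D]) (unfold D_def seq_sum_def, blast intro: order_refl)
  then show ?thesis
    unfolding lam_def by (intro tendsto_sandwich[OF _ _ tendsto_const D_lim] always_eventually) auto
qed

section \<open>Queue dynamics and swap counts of \<open>\<pi>_STAT\<close>\<close>

lemma stat_U_minus_stat_E:
  "int (stat_U C L S A t i j w) - int (stat_E C L S A t i j w)
     = (\<Sum>\<tau><t. int (A \<tau> i j w) - int (stat_R C L S \<tau> i j w))"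
  by (induction t) (auto simp: stat_U_def stat_E_def Let_def)

lemma stat_E_Suc_eq_0:
  "stat_U C L S A (Suc t) i j w > A t i j w \<Longrightarrow> stat_E C L S A (Suc t) i j w = 0"
  by (auto simp: stat_U_def stat_E_def Let_def)

lemma stat_U_Suc_gt_cases:
  assumes V: "V \<ge> 0" and U: "V < real (stat_U C L S A (Suc t) i j w)"
  shows "V < real (A t i j w) \<or>
    (\<Sum>\<tau><Suc t. real (stat_R C L S \<tau> i j w)) < (\<Sum>\<tau><Suc t. real (A \<tau> i j w))"
proof (cases "stat_U C L S A (Suc t) i j w > A t i j w")
  case False
  then show ?thesis using U by linarith
next
  case True
  then have "real_of_int (int (stat_U C L S A (Suc t) i j w))
      = real_of_int (\<Sum>\<tau><Suc t. int (A \<tau> i j w) - int (stat_R C L S \<tau> i j w))"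
    using stat_U_minus_stat_E[of C L S A "Suc t" i j w] stat_E_Suc_eq_0[OF True] by simp
  then have "real (stat_U C L S A (Suc t) i j w)
      = (\<Sum>\<tau><Suc t. real (A \<tau> i j w)) - (\<Sum>\<tau><Suc t. real (stat_R C L S \<tau> i j w))"
    by (simp add: of_int_sum sum_subtractf)
  then show ?thesis using U V by linarith
qed

lemma stat_F_commute: "stat_F C L t i j w = stat_F C L t j i w"
  unfolding stat_F_def by simp

lemma stat_R_commute: "stat_R C L S t i j w = stat_R C L S t j i w"
  unfolding stat_R_def by (simp add: stat_F_commute min.commute max.commute)

lemma stat_UE_commute:
  "(\<And>t. A t i j w = A t j i w) \<Longrightarrow> stat_UE C L S A t i j w = stat_UE C L S A t j i w"
  by (induction t) (auto simp: Let_def stat_R_commute)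

definition labelled_arrivals :: "(nat \<Rightarrow> nat \<Rightarrow> 'a \<Rightarrow> bool) \<Rightarrow> (nat \<Rightarrow> nat \<Rightarrow> 'a \<Rightarrow> nat)
    \<Rightarrow> nat \<Rightarrow> nat \<Rightarrow> nat \<Rightarrow> 'a \<Rightarrow> nat" where
  "labelled_arrivals C L t i j w = (\<Sum>\<tau><t. of_bool (C \<tau> i w \<and> L \<tau> i w = j))"

lemma stat_M_add_sum_stat_F:
  "stat_M C L t i j w + (\<Sum>\<tau><t. stat_F C L \<tau> i j w) = labelled_arrivals C L t i j w"
  by (induction t) (simp_all add: labelled_arrivals_def stat_F_def)

lemma min_stat_M_le_1: "min (stat_M C L t i j w) (stat_M C L t j i w) \<le> 1"
  by (cases t) (simp_all add: min_def)

lemma labelled_arrivals_le: "labelled_arrivals C L t i j w \<le> t"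
proof -
  have "labelled_arrivals C L t i j w \<le> (\<Sum>\<tau><t. 1)"
    unfolding labelled_arrivals_def by (intro sum_mono) simp
  then show ?thesis by simp
qed

lemma sum_stat_F_le: "(\<Sum>\<tau><t. stat_F C L \<tau> i j w) \<le> t"
  using stat_M_add_sum_stat_F[of C L t i j w] labelled_arrivals_le[of C L t i j w] by linarith

lemma stat_F_le: "stat_F C L t i j w \<le> t"
  using stat_M_add_sum_stat_F[of C L t i j w] labelled_arrivals_le[of C L t i j w]
  unfolding stat_F_def by simp

lemma sum_stat_F_ge:
  "real (labelled_arrivals C L t i j w) - 1
      - \<bar>real (labelled_arrivals C L t i j w) - real (labelled_arrivals C L t j i w)\<bar>
    \<le> real (\<Sum>\<tau><t. stat_F C L \<tau> i j w)"
proof -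
  have "real (stat_M C L t i j w) + real (\<Sum>\<tau><t. stat_F C L \<tau> i j w)
      = real (labelled_arrivals C L t i j w)"
    using stat_M_add_sum_stat_F[of C L t i j w] by (metis of_nat_add)
  moreover have "real (stat_M C L t j i w) + real (\<Sum>\<tau><t. stat_F C L \<tau> i j w)
      = real (labelled_arrivals C L t j i w)"
    using stat_M_add_sum_stat_F[of C L t j i w] stat_F_commute[of C L _ j i w]
    by (metis (no_types, lifting) of_nat_add sum.cong)
  moreover have "min (real (stat_M C L t i j w)) (real (stat_M C L t j i w)) \<le> 1"
    using min_stat_M_le_1[of C L t i j w] by linarith
  ultimately show ?thesis
    by (auto simp: min_def split: if_splits)
qed

lemma stat_M_cong:
  assumes "\<And>t' x. t' < t \<Longrightarrow> x \<in> {i, j} \<Longrightarrow> C t' x w = C' t' x w' \<and> L t' x w = L' t' x w'"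
  shows "stat_M C L t i j w = stat_M C' L' t i j w' \<and> stat_M C L t j i w = stat_M C' L' t j i w'"
  using assms by (induction t) auto

section \<open>One pair of end nodes under \<open>\<pi>_STAT\<close>\<close>

text \<open>Generation flags and labels read off a vector of source values: this turns the swap
  counts of \<open>\<pi>_STAT\<close> into functions of finitely many independent sources.\<close>

definition src_C :: "nat \<Rightarrow> nat \<Rightarrow> (src \<Rightarrow> nat) \<Rightarrow> bool" where
  "src_C t x v \<longleftrightarrow> v (SrcC t x) \<noteq> 0"

definition src_L :: "nat \<Rightarrow> nat \<Rightarrow> (src \<Rightarrow> nat) \<Rightarrow> nat" where
  "src_L t x v = v (SrcL t x)"

definition pair_sources :: "nat \<Rightarrow> nat \<Rightarrow> nat \<Rightarrow> src set" where
  "pair_sources i j T =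
     (\<lambda>(t, x). SrcC t x) ` ({..<T} \<times> {i, j}) \<union> (\<lambda>(t, x). SrcL t x) ` ({..<T} \<times> {i, j})"

lemma finite_pair_sources: "finite (pair_sources i j T)"
  unfolding pair_sources_def by auto

definition pair_queue_stable :: "'a measure \<Rightarrow> (nat \<Rightarrow> nat \<Rightarrow> nat \<Rightarrow> 'a \<Rightarrow> nat) \<Rightarrow> nat \<Rightarrow> nat \<Rightarrow> bool" where
  "pair_queue_stable M U i j \<longleftrightarrow> ((\<lambda>V. limsup (\<lambda>t. ereal ((1 / real t) *
      (\<Sum>\<tau><t. measure M {w \<in> space M. real (U \<tau> i j w) > V})))) \<longlongrightarrow> 0) at_top"

locale stat_switch_pair = prob_space M for M :: "'a measure" +
  fixes Kn :: nat and C :: "nat \<Rightarrow> nat \<Rightarrow> 'a \<Rightarrow> bool" and L :: "nat \<Rightarrow> nat \<Rightarrow> 'a \<Rightarrow> nat"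
    and S :: "nat \<Rightarrow> nat \<Rightarrow> nat \<Rightarrow> nat \<Rightarrow> 'a \<Rightarrow> bool" and i j :: nat and q f :: real
  assumes src_indep: "indep_vars (\<lambda>_. count_space UNIV) (src_var C L S) (src_index Kn)"
    and pair: "(i, j) \<in> upairs Kn"
    and q_bounds: "0 \<le> q" "q \<le> 1"
    and swap_law: "\<And>t k. measure M {w \<in> space M. S t i j k w} = q"
    and arrival_i: "\<And>t. measure M {w \<in> space M. C t i w} * measure M {w \<in> space M. L t i w = j} = f"
    and arrival_j: "\<And>t. measure M {w \<in> space M. C t j w} * measure M {w \<in> space M. L t j w = i} = f"
    and f_bounds: "0 \<le> f" "f \<le> 1"
begin

abbreviation src_block :: "src set \<Rightarrow> 'a \<Rightarrow> src \<Rightarrow> nat" where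
  "src_block \<equiv> var_block (src_var C L S)"

lemma pair_nodes: "i \<in> nodes Kn" "j \<in> nodes Kn" "i < j"
  using pair unfolding upairs_def by auto

lemma SrcC_in_src_index: "x \<in> nodes Kn \<Longrightarrow> SrcC t x \<in> src_index Kn"
  and SrcL_in_src_index: "x \<in> nodes Kn \<Longrightarrow> SrcL t x \<in> src_index Kn"
  and SrcS_in_src_index: "SrcS t i j k \<in> src_index Kn"
  using pair unfolding src_index_def by auto

lemma pair_sources_subset: "pair_sources i j T \<subseteq> src_index Kn"
  unfolding pair_sources_def using pair_nodes SrcC_in_src_index SrcL_in_src_index by auto

lemma measurable_src_var: "s \<in> src_index Kn \<Longrightarrow> src_var C L S s \<in> measurable M (count_space UNIV)"
  using src_indep unfolding indep_vars_def by blast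

lemma borel_measurable_src_block:
  fixes g :: "(src \<Rightarrow> nat) \<Rightarrow> real"
  assumes "K \<subseteq> src_index Kn" "finite K"
  shows "(\<lambda>w. g (src_block K w)) \<in> borel_measurable M"
  using assms measurable_src_var by (intro borel_measurable_var_block_comp) auto

lemma sets_src_block_pred:
  assumes "K \<subseteq> src_index Kn" "finite K"
  shows "{w \<in> space M. Q (src_block K w)} \<in> sets M"
  using assms measurable_src_var by (intro sets_var_block_pred) auto

lemma src_block_SrcC: "SrcC t x \<in> K \<Longrightarrow> src_block K w (SrcC t x) = of_bool (C t x w)"
  and src_block_SrcL: "SrcL t x \<in> K \<Longrightarrow> src_block K w (SrcL t x) = L t x w"
  and src_block_SrcS: "SrcS t x y k \<in> K \<Longrightarrow> src_block K w (SrcS t x y k) = of_bool (S t x y k w)"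
  unfolding var_block_def src_var_def by auto

lemma sets_C: "x \<in> nodes Kn \<Longrightarrow> {w \<in> space M. C t x w} \<in> sets M"
  using sets_src_block_pred[of "{SrcC t x}" "\<lambda>v. v (SrcC t x) \<noteq> 0"]
  by (simp add: SrcC_in_src_index src_block_SrcC)

lemma sets_L: "x \<in> nodes Kn \<Longrightarrow> {w \<in> space M. L t x w = y} \<in> sets M"
  using sets_src_block_pred[of "{SrcL t x}" "\<lambda>v. v (SrcL t x) = y"]
  by (simp add: SrcL_in_src_index src_block_SrcL)

lemma borel_measurable_labelled_arrival:
  assumes x: "x \<in> nodes Kn"
  shows "(\<lambda>w. of_bool (C \<tau> x w \<and> L \<tau> x w = y) :: real) \<in> borel_measurable M"
proof -
  have "(\<lambda>w. (\<lambda>v. of_bool (v (SrcC \<tau> x) \<noteq> 0 \<and> v (SrcL \<tau> x) = y) :: real)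
      (src_block {SrcC \<tau> x, SrcL \<tau> x} w)) \<in> borel_measurable M"
    using x SrcC_in_src_index SrcL_in_src_index
    by (intro borel_measurable_src_block) auto
  then show ?thesis
    by (simp add: src_block_SrcC src_block_SrcL)
qed

lemma integral_swap_centred: "(\<integral>w. of_bool (S t i j k w) - q \<partial>M) = 0"
proof -
  have "{w \<in> space M. S t i j k w} \<in> sets M"
    using sets_src_block_pred[of "{SrcS t i j k}" "\<lambda>v. v (SrcS t i j k) \<noteq> 0"]
    by (simp add: SrcS_in_src_index src_block_SrcS)
  moreover have "integrable M (\<lambda>w. of_bool (S t i j k w) :: real)"
    using borel_measurable_src_block[of "{SrcS t i j k}"
        "\<lambda>v. of_bool (v (SrcS t i j k) \<noteq> 0)"]
    by (intro integrable_const_bound[where B=1]) (auto simp: SrcS_in_src_index src_block_SrcS)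
  ultimately show ?thesis
    using integral_of_bool_eq_measure swap_law by (simp add: prob_space)
qed

lemma integral_labelled_arrival:
  assumes x: "x \<in> nodes Kn"
  shows "(\<integral>w. of_bool (C t x w \<and> L t x w = y) \<partial>M)
    = measure M {w \<in> space M. C t x w} * measure M {w \<in> space M. L t x w = y}"
proof -
  let ?g1 = "\<lambda>v. of_bool (v (SrcC t x) \<noteq> 0) :: real"
  let ?g2 = "\<lambda>v. of_bool (v (SrcL t x) = y) :: real"
  have K: "{SrcC t x} \<subseteq> src_index Kn" "finite {SrcC t x}"
    "{SrcL t x} \<subseteq> src_index Kn" "finite {SrcL t x}"
    using x SrcC_in_src_index SrcL_in_src_index by auto
  have "(\<integral>w. of_bool (C t x w \<and> L t x w = y) \<partial>M)
      = (\<integral>w. ?g1 (src_block {SrcC t x} w) * ?g2 (src_block {SrcL t x} w) \<partial>M)"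
    by (simp add: src_block_SrcC src_block_SrcL of_bool_conj)
  also have "\<dots> = (\<integral>w. ?g1 (src_block {SrcC t x} w) \<partial>M) * (\<integral>w. ?g2 (src_block {SrcL t x} w) \<partial>M)"
    by (rule integral_var_block_mult[where B=1 and B'=1, OF src_indep K]) auto
  also have "\<dots> = (\<integral>w. of_bool (C t x w) \<partial>M) * (\<integral>w. of_bool (L t x w = y) \<partial>M)"
    by (simp add: src_block_SrcC src_block_SrcL)
  also have "\<dots> = measure M {w \<in> space M. C t x w} * measure M {w \<in> space M. L t x w = y}"
    using integral_of_bool_eq_measure sets_C[OF x] sets_L[OF x] by simp
  finally show ?thesis .
qed

lemma labelled_arrivals_Chebyshev:
  assumes x: "x \<in> nodes Kn"
    and law: "\<And>t. measure M {w \<in> space M. C t x w} * measure M {w \<in> space M. L t x w = y} = f"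
    and a: "a > 0"
  shows "measure M {w \<in> space M. a \<le> \<bar>real (labelled_arrivals C L t x y w) - real t * f\<bar>}
    \<le> real t / a\<^sup>2"
proof -
  define K where "K \<tau> = {SrcC \<tau> x, SrcL \<tau> x}" for \<tau>
  define g where "g \<tau> v = (of_bool (v (SrcC \<tau> x) \<noteq> 0 \<and> v (SrcL \<tau> x) = y) :: real) - f" for \<tau> v
  define Y where "Y \<tau> w = (of_bool (C \<tau> x w \<and> L \<tau> x w = y) :: real) - f" for \<tau> w
  have K: "K \<tau> \<subseteq> src_index Kn" "finite (K \<tau>)" for \<tau>
    unfolding K_def using x SrcC_in_src_index SrcL_in_src_index by auto
  have Y_eq: "Y \<tau> w = g \<tau> (src_block (K \<tau>) w)" for \<tau> w
    unfolding Y_def g_def K_def by (simp add: src_block_SrcC src_block_SrcL)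
  have g_bound: "\<bar>g \<tau> v\<bar> \<le> 1" for \<tau> v
    unfolding g_def using f_bounds by auto
  have Y_meas: "Y \<tau> \<in> borel_measurable M" for \<tau>
    unfolding Y_eq[abs_def] by (rule borel_measurable_src_block[OF K])
  have EY: "(\<integral>w. Y \<tau> w \<partial>M) = 0" for \<tau>
  proof -
    have "integrable M (\<lambda>w. of_bool (C \<tau> x w \<and> L \<tau> x w = y) :: real)"
      using borel_measurable_labelled_arrival[OF x]
      by (intro integrable_const_bound[where B=1]) auto
    then show ?thesis
      unfolding Y_def using integral_labelled_arrival[OF x] law by (simp add: prob_space)
  qed
  have "measure M {w \<in> space M. a \<le> \<bar>\<Sum>\<tau>\<in>{..<t}. Y \<tau> w\<bar>} \<le> real t / a\<^sup>2"
  proof (rule measure_abs_sum_ge_orthogonal[where B=1, OF _ Y_meas _ _ _ a])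
    show "\<bar>Y \<tau> w\<bar> \<le> 1" for \<tau> w
      unfolding Y_eq by (rule g_bound)
    show "(\<integral>w. Y \<tau> w * Y \<sigma> w \<partial>M) = 0" if "\<tau> \<noteq> \<sigma>" for \<tau> \<sigma>
    proof -
      have "K \<tau> \<inter> K \<sigma> = {}"
        using that unfolding K_def by auto
      then have "(\<integral>w. Y \<tau> w * Y \<sigma> w \<partial>M) = (\<integral>w. Y \<tau> w \<partial>M) * (\<integral>w. Y \<sigma> w \<partial>M)"
        unfolding Y_eq by (rule integral_var_block_mult[OF src_indep K K _ g_bound g_bound])
      then show ?thesis using EY by simp
    qed
    show "(\<Sum>\<tau>\<in>{..<t}. (Y \<tau> w)\<^sup>2) \<le> real t" for w
    proof -
      have "(\<Sum>\<tau>\<in>{..<t}. (Y \<tau> w)\<^sup>2) \<le> (\<Sum>\<tau>\<in>{..<t}. 1)"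
        using g_bound unfolding Y_eq by (intro sum_mono) (simp add: abs_square_le_1)
      then show ?thesis by simp
    qed
  qed simp
  moreover have "(\<Sum>\<tau>\<in>{..<t}. Y \<tau> w) = real (labelled_arrivals C L t x y w) - real t * f" for w
    unfolding Y_def labelled_arrivals_def by (simp add: sum_subtractf)
  ultimately show ?thesis by simp
qed

lemma stat_F_src_block:
  assumes "\<tau> \<le> T" "pair_sources i j T \<subseteq> K"
  shows "stat_F C L \<tau> i j w = stat_F src_C src_L \<tau> i j (src_block K w)"
proof -
  have "stat_M C L \<tau> i j w = stat_M src_C src_L \<tau> i j (src_block K w)
      \<and> stat_M C L \<tau> j i w = stat_M src_C src_L \<tau> j i (src_block K w)"
  proof (rule stat_M_cong)
    fix t x assume "t < \<tau>" "x \<in> {i, j}"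
    then have "SrcC t x \<in> K" "SrcL t x \<in> K"
      using assms unfolding pair_sources_def by force+
    then show "C t x w = src_C t x (src_block K w) \<and> L t x w = src_L t x (src_block K w)"
      unfolding src_C_def src_L_def by (simp add: src_block_SrcC src_block_SrcL)
  qed
  then show ?thesis
    unfolding stat_F_def by simp
qed

lemma borel_measurable_stat_F: "(\<lambda>w. real (stat_F C L \<tau> i j w)) \<in> borel_measurable M"
proof -
  have "(\<lambda>w. real (stat_F src_C src_L \<tau> i j (src_block (pair_sources i j \<tau>) w))) \<in> borel_measurable M"
    by (rule borel_measurable_src_block[OF pair_sources_subset finite_pair_sources])
  then show ?thesis
    by (simp only: stat_F_src_block[OF order_refl subset_refl])
qed

lemma borel_measurable_labelled_arrivals:
  assumes x: "x \<in> nodes Kn"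
  shows "(\<lambda>w. real (labelled_arrivals C L t x y w)) \<in> borel_measurable M"
proof -
  have "(\<lambda>w. \<Sum>\<tau><t. of_bool (C \<tau> x w \<and> L \<tau> x w = y) :: real) \<in> borel_measurable M"
    using borel_measurable_labelled_arrival[OF x] by (intro borel_measurable_sum) auto
  then show ?thesis
    unfolding labelled_arrivals_def by simp
qed

text \<open>The attempt count depends only on generation and labelling sources, so
  these variables are orthogonal and \<open>\<Sum> R\<close> concentrates around \<open>q \<Sum> F\<close>.\<close>

definition swap_noise :: "nat \<Rightarrow> nat \<Rightarrow> 'a \<Rightarrow> real" where
  "swap_noise \<tau> k w = of_bool (k < stat_F C L \<tau> i j w) * (of_bool (S \<tau> i j k w) - q)"

lemma swap_noise_bound: "\<bar>swap_noise \<tau> k w\<bar> \<le> 1"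
  unfolding swap_noise_def using q_bounds by (auto simp: abs_mult)

lemma borel_measurable_swap_noise: "swap_noise \<tau> k \<in> borel_measurable M"
proof -
  define K where "K = pair_sources i j \<tau> \<union> {SrcS \<tau> i j k}"
  have K: "K \<subseteq> src_index Kn" "finite K"
    unfolding K_def using pair_sources_subset finite_pair_sources SrcS_in_src_index by auto
  have "stat_F C L \<tau> i j w = stat_F src_C src_L \<tau> i j (src_block K w)" for w
    by (rule stat_F_src_block) (auto simp: K_def)
  then have "swap_noise \<tau> k = (\<lambda>w. (\<lambda>v. of_bool (k < stat_F src_C src_L \<tau> i j v)
      * (of_bool (v (SrcS \<tau> i j k) \<noteq> 0) - q)) (src_block K w))"
    unfolding swap_noise_def by (simp add: fun_eq_iff K_def src_block_SrcS)
  then show ?thesis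
    by (simp only:) (rule borel_measurable_src_block[OF K])
qed

lemma swap_noise_orthogonal:
  assumes "(\<tau>, k) \<noteq> (\<tau>', k')"
  shows "(\<integral>w. swap_noise \<tau> k w * swap_noise \<tau>' k' w \<partial>M) = 0"
proof -
  define K1 where "K1 = pair_sources i j (max \<tau> \<tau>') \<union> {SrcS \<tau>' i j k'}"
  define K2 where "K2 = {SrcS \<tau> i j k}"
  define g1 where "g1 v = of_bool (k < stat_F src_C src_L \<tau> i j v)
      * of_bool (k' < stat_F src_C src_L \<tau>' i j v) * (of_bool (v (SrcS \<tau>' i j k') \<noteq> 0) - q)"
    for v :: "src \<Rightarrow> nat"
  define g2 where "g2 v = of_bool (v (SrcS \<tau> i j k) \<noteq> 0) - q" for v :: "src \<Rightarrow> nat"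
  have K1: "K1 \<subseteq> src_index Kn" "finite K1"
    unfolding K1_def using pair_sources_subset finite_pair_sources SrcS_in_src_index by auto
  have K2: "K2 \<subseteq> src_index Kn" "finite K2"
    unfolding K2_def using SrcS_in_src_index by auto
  have disj: "K1 \<inter> K2 = {}"
    using assms unfolding K1_def K2_def pair_sources_def by auto
  have centred_bound: "\<bar>(of_bool b :: real) - q\<bar> \<le> 1" for b
    using q_bounds by auto
  have g1_bound: "\<bar>g1 v\<bar> \<le> 1" for v
    unfolding g1_def using centred_bound by (auto simp: abs_mult)
  have g2_bound: "\<bar>g2 v\<bar> \<le> 1" for v
    unfolding g2_def by (rule centred_bound)
  have "stat_F C L \<sigma> i j w = stat_F src_C src_L \<sigma> i j (src_block K1 w)"
    if "\<sigma> \<in> {\<tau>, \<tau>'}" for \<sigma> w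
    using that by (intro stat_F_src_block[of _ "max \<tau> \<tau>'"]) (auto simp: K1_def)
  then have "swap_noise \<tau> k w * swap_noise \<tau>' k' w = g1 (src_block K1 w) * g2 (src_block K2 w)" for w
    unfolding swap_noise_def g1_def g2_def by (simp add: K1_def K2_def src_block_SrcS mult_ac)
  then have "(\<integral>w. swap_noise \<tau> k w * swap_noise \<tau>' k' w \<partial>M)
      = (\<integral>w. g1 (src_block K1 w) \<partial>M) * (\<integral>w. g2 (src_block K2 w) \<partial>M)"
    using integral_var_block_mult[OF src_indep K1 K2 disj g1_bound g2_bound] by simp
  also have "(\<integral>w. g2 (src_block K2 w) \<partial>M) = 0"
    using integral_swap_centred unfolding g2_def K2_def by (simp add: src_block_SrcS)
  finally show ?thesis by simp
qed

lemma sum_swap_noise_sq_le: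
  "(\<Sum>p\<in>{..<t} \<times> {..<t}. (swap_noise (fst p) (snd p) w)\<^sup>2) \<le> real t"
proof -
  have "(\<Sum>p\<in>{..<t} \<times> {..<t}. (swap_noise (fst p) (snd p) w)\<^sup>2)
      = (\<Sum>\<tau><t. \<Sum>k<t. (swap_noise \<tau> k w)\<^sup>2)"
    by (simp add: sum.cartesian_product case_prod_beta)
  also have "\<dots> \<le> (\<Sum>\<tau><t. \<Sum>k<t. of_bool (k < stat_F C L \<tau> i j w))"
  proof (intro sum_mono)
    fix \<tau> k
    have "\<bar>(of_bool (S \<tau> i j k w) :: real) - q\<bar> \<le> 1"
      using q_bounds by auto
    then show "(swap_noise \<tau> k w)\<^sup>2 \<le> of_bool (k < stat_F C L \<tau> i j w)"
      unfolding swap_noise_def by (simp add: power_mult_distrib abs_square_le_1)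
  qed
  also have "\<dots> = (\<Sum>\<tau><t. real (stat_F C L \<tau> i j w))"
  proof (rule sum.cong[OF refl])
    fix \<tau> assume "\<tau> \<in> {..<t}"
    then have "{..<t} \<inter> {k. k < stat_F C L \<tau> i j w} = {..<stat_F C L \<tau> i j w}"
      using stat_F_le[of C L \<tau> i j w] by auto
    then show "(\<Sum>k<t. of_bool (k < stat_F C L \<tau> i j w)) = real (stat_F C L \<tau> i j w)"
      by simp
  qed
  also have "\<dots> \<le> real t"
    using sum_stat_F_le[of C L i j w t] by (simp flip: of_nat_sum)
  finally show ?thesis .
qed

lemma swap_noise_Chebyshev:
  assumes a: "a > 0"
  shows "measure M {w \<in> space M. a \<le> \<bar>\<Sum>p\<in>{..<t} \<times> {..<t}. swap_noise (fst p) (snd p) w\<bar>}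
    \<le> real t / a\<^sup>2"
  using swap_noise_orthogonal
  by (intro measure_abs_sum_ge_orthogonal[where B=1, OF _ _ _ _ sum_swap_noise_sq_le a])
    (auto simp: borel_measurable_swap_noise swap_noise_bound prod_eq_iff)

lemma sum_stat_R_eq:
  "(\<Sum>\<tau><t. real (stat_R C L S \<tau> i j w))
     = (\<Sum>p\<in>{..<t} \<times> {..<t}. swap_noise (fst p) (snd p) w) + q * real (\<Sum>\<tau><t. stat_F C L \<tau> i j w)"
proof -
  have "real (stat_R C L S \<tau> i j w) = (\<Sum>k<t. swap_noise \<tau> k w) + q * real (stat_F C L \<tau> i j w)"
    if "\<tau> < t" for \<tau>
  proof -
    have F_le: "stat_F C L \<tau> i j w \<le> t"
      using stat_F_le[of C L \<tau> i j w] that by simp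
    then have attempts: "{..<t} \<inter> {k. k < stat_F C L \<tau> i j w} = {..<stat_F C L \<tau> i j w}"
      by auto
    have "{k. k < stat_F C L \<tau> i j w \<and> S \<tau> i j k w} = {..<t} \<inter> {k. k < stat_F C L \<tau> i j w \<and> S \<tau> i j k w}"
      using F_le by auto
    then have "real (stat_R C L S \<tau> i j w) = (\<Sum>k<t. of_bool (k < stat_F C L \<tau> i j w \<and> S \<tau> i j k w))"
      unfolding stat_R_def using pair_nodes by (simp add: min_def max_def)
    also have "\<dots> = (\<Sum>k<t. swap_noise \<tau> k w + q * of_bool (k < stat_F C L \<tau> i j w))"
      unfolding swap_noise_def by (intro sum.cong) (auto simp: algebra_simps)
    also have "\<dots> = (\<Sum>k<t. swap_noise \<tau> k w) + q * real (stat_F C L \<tau> i j w)"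
      using attempts by (simp add: sum.distrib flip: sum_distrib_left)
    finally show ?thesis .
  qed
  then have "(\<Sum>\<tau><t. real (stat_R C L S \<tau> i j w))
      = (\<Sum>\<tau><t. (\<Sum>k<t. swap_noise \<tau> k w) + q * real (stat_F C L \<tau> i j w))"
    by (intro sum.cong) auto
  then show ?thesis
    by (simp add: sum.distrib sum_distrib_left sum.cartesian_product case_prod_beta)
qed

lemma borel_measurable_sum_stat_R: "(\<lambda>w. \<Sum>\<tau><t. real (stat_R C L S \<tau> i j w)) \<in> borel_measurable M"
proof -
  have "(\<lambda>w. (\<Sum>p\<in>{..<t} \<times> {..<t}. swap_noise (fst p) (snd p) w)
      + q * (\<Sum>\<tau><t. real (stat_F C L \<tau> i j w))) \<in> borel_measurable M"
    using borel_measurable_swap_noise borel_measurable_stat_F by measurable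
  then show ?thesis
    unfolding sum_stat_R_eq by simp
qed

lemma sum_stat_R_ge:
  assumes q: "q > 0" and t: "4 * q \<le> real t * \<epsilon>"
    and noise: "\<bar>\<Sum>p\<in>{..<t} \<times> {..<t}. swap_noise (fst p) (snd p) w\<bar> < real t * \<epsilon> / 6"
    and arrivals_i: "\<bar>real (labelled_arrivals C L t i j w) - real t * f\<bar> < real t * \<epsilon> / (12 * q)"
    and arrivals_j: "\<bar>real (labelled_arrivals C L t j i w) - real t * f\<bar> < real t * \<epsilon> / (12 * q)"
  shows "real t * (q * f) - 2 * real t * \<epsilon> / 3 < (\<Sum>\<tau><t. real (stat_R C L S \<tau> i j w))"
proof -
  define F where "F = real (\<Sum>\<tau><t. stat_F C L \<tau> i j w)"
  have "real t * f - 3 * (real t * \<epsilon> / (12 * q)) - 1 \<le> F"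
    using sum_stat_F_ge[of C L t i j w] arrivals_i arrivals_j unfolding F_def by linarith
  then have "q * (real t * f - 3 * (real t * \<epsilon> / (12 * q)) - 1) \<le> q * F"
    using q by (intro mult_left_mono) auto
  moreover have "q * (real t * f - 3 * (real t * \<epsilon> / (12 * q)) - 1) = real t * (q * f) - real t * \<epsilon> / 4 - q"
    using q by (simp add: field_simps)
  ultimately have "real t * (q * f) - real t * \<epsilon> / 2 \<le> q * F"
    using t by linarith
  then show ?thesis
    using noise sum_stat_R_eq[of w t] unfolding F_def by linarith
qed

lemma service_shortfall_le:
  assumes lam: "0 \<le> lam" "lam + \<epsilon> \<le> q * f" and \<epsilon>: "\<epsilon> > 0" and t: "real t * \<epsilon> \<ge> 4"
  shows "measure M {w \<in> space M. (\<Sum>\<tau><t. real (stat_R C L S \<tau> i j w)) < real t * (lam + \<epsilon> / 3)}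
    \<le> (36 / \<epsilon>\<^sup>2 + 2 * (12 * q / \<epsilon>)\<^sup>2) / real t"
proof -
  have "0 < q * f"
    using lam \<epsilon> by linarith
  then have q: "q > 0"
    using q_bounds by (cases "q = 0") auto
  have t_pos: "real t > 0"
    using t \<epsilon> by (cases t) auto
  define a1 where "a1 = real t * \<epsilon> / 6"
  define a2 where "a2 = real t * \<epsilon> / (12 * q)"
  have a1: "a1 > 0" and a2: "a2 > 0"
    unfolding a1_def a2_def using t_pos \<epsilon> q by simp_all
  let ?B1 = "{w \<in> space M. a1 \<le> \<bar>\<Sum>p\<in>{..<t} \<times> {..<t}. swap_noise (fst p) (snd p) w\<bar>}"
  let ?B2 = "{w \<in> space M. a2 \<le> \<bar>real (labelled_arrivals C L t i j w) - real t * f\<bar>}"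
  let ?B3 = "{w \<in> space M. a2 \<le> \<bar>real (labelled_arrivals C L t j i w) - real t * f\<bar>}"
  have "{w \<in> space M. (\<Sum>\<tau><t. real (stat_R C L S \<tau> i j w)) < real t * (lam + \<epsilon> / 3)}
      \<subseteq> ?B1 \<union> ?B2 \<union> ?B3"
  proof
    fix w assume w: "w \<in> {w \<in> space M. (\<Sum>\<tau><t. real (stat_R C L S \<tau> i j w)) < real t * (lam + \<epsilon> / 3)}"
    show "w \<in> ?B1 \<union> ?B2 \<union> ?B3"
    proof (rule ccontr)
      assume "w \<notin> ?B1 \<union> ?B2 \<union> ?B3"
      with w have "real t * (q * f) - 2 * real t * \<epsilon> / 3 < (\<Sum>\<tau><t. real (stat_R C L S \<tau> i j w))"
        using q t q_bounds unfolding a1_def a2_def by (intro sum_stat_R_ge) auto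
      moreover have "real t * (lam + \<epsilon>) \<le> real t * (q * f)"
        using lam t_pos by (intro mult_left_mono) auto
      ultimately show False
        using w by (simp add: algebra_simps)
    qed
  qed
  moreover have "?B1 \<in> sets M"
    using borel_measurable_swap_noise by measurable
  moreover have "?B2 \<in> sets M" "?B3 \<in> sets M"
    using borel_measurable_labelled_arrivals pair_nodes by measurable
  ultimately have "measure M {w \<in> space M. (\<Sum>\<tau><t. real (stat_R C L S \<tau> i j w)) < real t * (lam + \<epsilon> / 3)}
      \<le> measure M ?B1 + measure M ?B2 + measure M ?B3"
    by (rule measure_le_of_subset_Un3)
  also have "\<dots> \<le> real t / a1\<^sup>2 + real t / a2\<^sup>2 + real t / a2\<^sup>2"
    using swap_noise_Chebyshev[OF a1, of t]
      labelled_arrivals_Chebyshev[OF pair_nodes(1) arrival_i a2, of t]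
      labelled_arrivals_Chebyshev[OF pair_nodes(2) arrival_j a2, of t]
    by linarith
  also have "\<dots> = (36 / \<epsilon>\<^sup>2 + 2 * (12 * q / \<epsilon>)\<^sup>2) / real t"
    unfolding a1_def a2_def using t_pos \<epsilon> q by (simp add: field_simps power2_eq_square)
  finally show ?thesis .
qed

lemma service_shortfall_tendsto_0:
  assumes lam: "0 \<le> lam" "lam + \<epsilon> \<le> q * f" and \<epsilon>: "\<epsilon> > 0"
  shows "(\<lambda>n. measure M {w \<in> space M. (\<Sum>\<tau><n. real (stat_R C L S \<tau> i j w)) < real n * (lam + \<epsilon> / 3)})
    \<longlonglongrightarrow> 0"
proof (rule tendsto_sandwich[OF _ _ tendsto_const lim_const_over_n])
  obtain N :: nat where N: "real N \<ge> 4 / \<epsilon>"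
    using real_arch_simple by blast
  have "real n * \<epsilon> \<ge> 4" if "n \<ge> N" for n
  proof -
    have "4 / \<epsilon> \<le> real n" using N that by linarith
    then show ?thesis using \<epsilon> by (simp add: field_simps)
  qed
  then show "\<forall>\<^sub>F n in sequentially.
      measure M {w \<in> space M. (\<Sum>\<tau><n. real (stat_R C L S \<tau> i j w)) < real n * (lam + \<epsilon> / 3)}
      \<le> (36 / \<epsilon>\<^sup>2 + 2 * (12 * q / \<epsilon>)\<^sup>2) / real n"
    using lam \<epsilon> by (intro eventually_sequentiallyI[of N] service_shortfall_le) auto
qed simp

lemma stat_U_Suc_tail_le:
  assumes A_meas: "\<And>t. A t i j \<in> measurable M (count_space UNIV)" and V: "V \<ge> 0"
  shows "measure M {w \<in> space M. real (stat_U C L S A (Suc t) i j w) > V}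
    \<le> measure M {w \<in> space M. c \<le> (\<Sum>s<Suc t. real (A s i j w))}
      + measure M {w \<in> space M. (\<Sum>s<Suc t. real (stat_R C L S s i j w)) < c}
      + measure M {w \<in> space M. V < real (A t i j w)}"
proof (rule measure_le_of_subset_Un3)
  show "{w \<in> space M. real (stat_U C L S A (Suc t) i j w) > V}
      \<subseteq> {w \<in> space M. c \<le> (\<Sum>s<Suc t. real (A s i j w))}
        \<union> {w \<in> space M. (\<Sum>s<Suc t. real (stat_R C L S s i j w)) < c}
        \<union> {w \<in> space M. V < real (A t i j w)}"
    using stat_U_Suc_gt_cases[OF V, of C L S A t i j] by fastforce
  have [measurable]: "(\<lambda>w. real (A s i j w)) \<in> borel_measurable M" for s
    using measurable_compose[OF A_meas, of "\<lambda>n. real n" borel] by simp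
  show "{w \<in> space M. c \<le> (\<Sum>s<Suc t. real (A s i j w))} \<in> sets M"
    "{w \<in> space M. V < real (A t i j w)} \<in> sets M"
    by measurable
  show "{w \<in> space M. (\<Sum>s<Suc t. real (stat_R C L S s i j w)) < c} \<in> sets M"
    using borel_measurable_sum_stat_R by measurable
qed

lemma pair_queue_stable_stat_U:
  fixes A :: "nat \<Rightarrow> nat \<Rightarrow> nat \<Rightarrow> 'a \<Rightarrow> nat" and \<epsilon> :: real
  assumes A_meas: "\<And>t. A t i j \<in> measurable M (count_space UNIV)"
    and A_stat: "stationary_process M (\<lambda>t. A t i j)" and A_erg: "ergodic_process M (\<lambda>t. A t i j)"
    and A_int: "integrable M (\<lambda>w. real (A 0 i j w))"
    and \<epsilon>: "\<epsilon> > 0" and rate: "expectation (\<lambda>w. real (A 0 i j w)) + \<epsilon> \<le> q * f"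
  shows "pair_queue_stable M (stat_U C L S A) i j"
proof -
  define lam where "lam = expectation (\<lambda>w. real (A 0 i j w))"
  have lam: "0 \<le> lam"
    unfolding lam_def by (rule integral_nonneg_AE) auto
  define arrivals_high where "arrivals_high n =
    measure M {w \<in> space M. real n * (lam + \<epsilon> / 3) \<le> (\<Sum>t<n. real (A t i j w))}" for n
  define service_low where "service_low n =
    measure M {w \<in> space M. (\<Sum>\<tau><n. real (stat_R C L S \<tau> i j w)) < real n * (lam + \<epsilon> / 3)}" for n
  define tail where "tail V = measure M {w \<in> space M. V < real (A 0 i j w)}" for V :: real
  have "arrivals_high \<longlonglongrightarrow> 0"
    unfolding arrivals_high_def lam_def using \<epsilon>
    by (intro ergodic_sum_upper_deviation[OF prob_space_axioms A_meas A_stat A_erg A_int]) simp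
  moreover have "service_low \<longlonglongrightarrow> 0"
    unfolding service_low_def using lam rate \<epsilon> unfolding lam_def
    by (intro service_shortfall_tendsto_0) auto
  ultimately have arrivals_service: "(\<lambda>n. arrivals_high n + service_low n) \<longlonglongrightarrow> 0"
    using tendsto_add by fastforce
  have tail_shift: "measure M {w \<in> space M. V < real (A t i j w)} = tail V" for t V
    unfolding tail_def by (rule stationary_tail_shift[OF A_stat A_meas])
  have slot: "measure M {w \<in> space M. real (stat_U C L S A \<tau> i j w) > V}
      \<le> arrivals_high \<tau> + service_low \<tau> + tail V" if V: "V \<ge> 0" for V \<tau>
  proof (cases \<tau>)
    case 0
    then show ?thesis
      using V unfolding arrivals_high_def service_low_def tail_def by (simp add: stat_U_def)
  next
    case (Suc t)
    then show ?thesis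
      using stat_U_Suc_tail_le[where A=A and t=t and c="real (Suc t) * (lam + \<epsilon> / 3)", OF A_meas V]
      unfolding arrivals_high_def service_low_def tail_shift by simp
  qed
  have "(tail \<longlongrightarrow> 0) at_top"
    unfolding tail_def by (rule tail_prob_tendsto_0[OF A_int])
  then show ?thesis
    unfolding pair_queue_stable_def using slot arrivals_service
    by (intro limsup_cesaro_mean_tendsto_0[where u="\<lambda>V \<tau>. measure M {w \<in> space M. real (stat_U C L S A \<tau> i j w) > V}"
          and e="\<lambda>n. arrivals_high n + service_low n"])
      (auto simp: tail_def add.assoc)
qed

end

lemma stat_switch_pair_of_labelling:
  fixes ft :: "nat \<Rightarrow> nat \<Rightarrow> real"
  assumes M: "prob_space M" and p: "\<forall>i \<in> nodes Kn. 0 \<le> p i \<and> p i \<le> 1" and q: "0 \<le> q" "q \<le> 1"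
    and src_indep: "prob_space.indep_vars M (\<lambda>_. count_space UNIV) (src_var C L S) (src_index Kn)"
    and C_law: "\<forall>t. \<forall>i \<in> nodes Kn. measure M {w \<in> space M. C t i w} = p i"
    and S_law: "\<forall>t k. \<forall>(i, j) \<in> upairs Kn. measure M {w \<in> space M. S t i j k w} = q"
    and ft_sym: "\<forall>i j. ft i j = ft j i \<and> 0 \<le> ft i j"
    and ft_cap: "\<forall>j \<in> nodes Kn. (\<Sum>i \<in> nodes Kn - {j}. ft i j) \<le> p j"
    and L_law: "\<forall>t. \<forall>i \<in> nodes Kn. \<forall>j \<in> nodes Kn. i \<noteq> j \<longrightarrow>
                  measure M {w \<in> space M. L t i w = j} = ft i j / p i"
    and ij: "(i, j) \<in> upairs Kn" and rate_pos: "0 < q * ft i j"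
  shows "stat_switch_pair M Kn C L S i j q (ft i j)"
proof -
  have ft_pos: "ft i j > 0"
    using rate_pos q by (auto simp: zero_less_mult_iff)
  have nodes: "i \<in> nodes Kn" "j \<in> nodes Kn" "i \<noteq> j"
    using ij unfolding upairs_def by auto
  have ft_comm: "ft x y = ft y x" and ft_nonneg: "0 \<le> ft x y" for x y
    using ft_sym by blast+
  have ft_le_p: "ft x y \<le> p y" if "x \<in> nodes Kn" "y \<in> nodes Kn" "x \<noteq> y" for x y
  proof -
    have "ft x y \<le> (\<Sum>x' \<in> nodes Kn - {y}. ft x' y)"
      using that ft_nonneg by (intro member_le_sum) (auto simp: nodes_def)
    also have "\<dots> \<le> p y"
      using ft_cap that by blast
    finally show ?thesis .
  qed
  have arrival: "measure M {w \<in> space M. C t x w} * measure M {w \<in> space M. L t x w = y} = ft x y"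
    if "x \<in> nodes Kn" "y \<in> nodes Kn" "x \<noteq> y" "ft x y > 0" for t x y
  proof -
    have "0 < p x"
      using ft_le_p[of y x] ft_comm[of x y] that by simp
    with that show ?thesis
      by (simp add: C_law L_law)
  qed
  have swap_law: "measure M {w \<in> space M. S t i j k w} = q" for t k
    using S_law[rule_format, OF ij] by simp
  have arrival_i: "measure M {w \<in> space M. C t i w} * measure M {w \<in> space M. L t i w = j} = ft i j"
    and arrival_j: "measure M {w \<in> space M. C t j w} * measure M {w \<in> space M. L t j w = i} = ft i j"
    for t
    using arrival[of i j t] arrival[of j i t] ft_comm[of j i] ft_pos nodes by auto
  have "ft i j \<le> 1"
    using ft_le_p[of i j] p nodes by auto
  with ft_pos show ?thesis
    by (intro stat_switch_pair.intro[OF M] stat_switch_pair_axioms.intro[OF src_indep ij q swap_law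
          arrival_i arrival_j]) simp_all
qed

lemma subalgebra_stat_hist_0: "subalgebra M (stat_hist M Kn C L S A 0)"
  unfolding stat_hist_def gen_sigma_def subalgebra_def by (auto simp: sets.sigma_sets_subset)

lemma switch_stable_of_upairs:
  assumes A_sym: "\<And>t i j w. A t i j w = A t j i w"
    and pairs: "\<And>i j. (i, j) \<in> upairs Kn \<Longrightarrow> pair_queue_stable M (stat_U C L S A) i j"
  shows "switch_stable M Kn (stat_U C L S A)"
  unfolding switch_stable_def pair_queue_stable_def[symmetric]
proof (intro ballI impI)
  fix i j assume ij: "i \<in> nodes Kn" "j \<in> nodes Kn" "i \<noteq> j"
  show "pair_queue_stable M (stat_U C L S A) i j"
  proof (cases "i < j")
    case True
    with ij show ?thesis by (intro pairs) (simp add: upairs_def)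
  next
    case False
    with ij have "(j, i) \<in> upairs Kn"
      by (simp add: upairs_def)
    moreover have "stat_U C L S A \<tau> i j w = stat_U C L S A \<tau> j i w" for \<tau> w
      unfolding stat_U_def using stat_UE_commute[of A i j w] A_sym by simp
    ultimately show ?thesis
      using pairs[of j i] by (simp add: pair_queue_stable_def)
  qed
qed

theorem corollary1:
  fixes M :: "'a measure" and Kn :: nat
    and p :: "nat \<Rightarrow> real" and q :: real and lam :: "nat \<Rightarrow> nat \<Rightarrow> real"
    and eps :: real and Amax :: real and ft :: "nat \<Rightarrow> nat \<Rightarrow> real"
    and C :: "nat \<Rightarrow> nat \<Rightarrow> 'a \<Rightarrow> bool" and L :: "nat \<Rightarrow> nat \<Rightarrow> 'a \<Rightarrow> nat"
    and S :: "nat \<Rightarrow> nat \<Rightarrow> nat \<Rightarrow> nat \<Rightarrow> 'a \<Rightarrow> bool"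
    and A :: "nat \<Rightarrow> nat \<Rightarrow> nat \<Rightarrow> 'a \<Rightarrow> nat"
  assumes M: "prob_space M"
    and p: "\<forall>i \<in> nodes Kn. 0 \<le> p i \<and> p i \<le> 1"
    and q: "0 \<le> q" "q \<le> 1"
    \<comment> \<open>generation, labelling and swap-outcome randomness: measurable, independent, with given laws\<close>
    and C_meas: "\<forall>t. \<forall>i \<in> nodes Kn. C t i \<in> measurable M (count_space UNIV)"
    and L_meas: "\<forall>t. \<forall>i \<in> nodes Kn. L t i \<in> measurable M (count_space UNIV)"
    and S_meas: "\<forall>t k. \<forall>(i, j) \<in> upairs Kn. S t i j k \<in> measurable M (count_space UNIV)"
    and src_indep: "prob_space.indep_vars M (\<lambda>_. count_space UNIV) (src_var C L S) (src_index Kn)"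
    and C_law: "\<forall>t. \<forall>i \<in> nodes Kn. measure M {w \<in> space M. C t i w} = p i"
    and S_law: "\<forall>t k. \<forall>(i, j) \<in> upairs Kn. measure M {w \<in> space M. S t i j k w} = q"
    \<comment> \<open>protocol parameters f~ and the labelling law\<close>
    and eps: "eps > 0"
    and ft_sym: "\<forall>i j. ft i j = ft j i \<and> 0 \<le> ft i j"
    and ft_cap: "\<forall>j \<in> nodes Kn. (\<Sum>i \<in> nodes Kn - {j}. ft i j) \<le> p j"
    and ft_rate: "\<forall>i \<in> nodes Kn. \<forall>j \<in> nodes Kn. i \<noteq> j \<longrightarrow> lam i j + eps \<le> q * ft i j"
    and L_law: "\<forall>t. \<forall>i \<in> nodes Kn. \<forall>j \<in> nodes Kn. i \<noteq> j \<longrightarrow>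
                  measure M {w \<in> space M. L t i w = j} = ft i j / p i"
    \<comment> \<open>requests\<close>
    and A_sym: "\<forall>t i j w. A t i j w = A t j i w"
    and A_meas: "\<forall>t. \<forall>(i, j) \<in> upairs Kn. A t i j \<in> measurable M (count_space UNIV)"
    and A_indep: "prob_space.indep_vars M (\<lambda>_. nat_seq_space) (\<lambda>(i, j) w t. A t i j w) (upairs Kn)"
    and A_src_indep: "indep_rv M
          (PiM (src_index Kn) (\<lambda>_. count_space UNIV)) (\<lambda>w. restrict (\<lambda>s. src_var C L S s w) (src_index Kn))
          (PiM (upairs Kn) (\<lambda>_. nat_seq_space)) (\<lambda>w. restrict (\<lambda>(i, j) t. A t i j w) (upairs Kn))"
    and A_stat: "\<forall>(i, j) \<in> upairs Kn. stationary_process M (\<lambda>t. A t i j)"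
    and A_erg: "\<forall>(i, j) \<in> upairs Kn. ergodic_process M (\<lambda>t. A t i j)"
    and lam_def: "\<forall>i \<in> nodes Kn. \<forall>j \<in> nodes Kn. i \<noteq> j \<longrightarrow>
                   lam i j = prob_space.expectation M (\<lambda>w. real (A 0 i j w))"
    and A_mom: "\<forall>t. \<forall>i \<in> nodes Kn. \<forall>j \<in> nodes Kn. i \<noteq> j \<longrightarrow>
                  (AE w in M. nn_cond_exp M (stat_hist M Kn C L S A t)
                     (\<lambda>w. ennreal ((real (A t i j w))\<^sup>2)) w \<le> ennreal (Amax\<^sup>2))"
    and Lambda: "in_Lambda Kn p q (\<lambda>i j. lam i j + eps)"
  shows "switch_stable M Kn (stat_U C L S A)"
proof (rule switch_stable_of_upairs)
  \<comment> \<open>Under \<open>\<pi>_STAT\<close> each pair is served by its own labelled pairs.\<close>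
  show "A t i j w = A t j i w" for t i j w
    using A_sym by blast
  show "pair_queue_stable M (stat_U C L S A) i j" if ij: "(i, j) \<in> upairs Kn" for i j
  proof -
    interpret prob_space M by (rule M)
    have nodes: "i \<in> nodes Kn" "j \<in> nodes Kn" "i \<noteq> j"
      using ij unfolding upairs_def by auto
    have A_ij: "A t i j \<in> measurable M (count_space UNIV)" for t
      using A_meas[rule_format, OF ij] by simp
    have A_int: "integrable M (\<lambda>w. real (A 0 i j w))"
      using A_mom[rule_format, OF nodes, of 0]
      by (rule integrable_of_nn_cond_exp_sq_le[OF subalgebra_stat_hist_0 A_ij])
    have rate: "expectation (\<lambda>w. real (A 0 i j w)) + eps \<le> q * ft i j"
      using ft_rate[rule_format, OF nodes] lam_def[rule_format, OF nodes] by simp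
    moreover have "0 \<le> expectation (\<lambda>w. real (A 0 i j w))"
      by (rule integral_nonneg_AE) auto
    ultimately have "0 < q * ft i j"
      using eps by linarith
    then interpret stat_switch_pair M Kn C L S i j q "ft i j"
      by (rule stat_switch_pair_of_labelling[OF M p q src_indep C_law S_law ft_sym ft_cap L_law ij])
    show ?thesis
      using bspec[OF A_stat ij] bspec[OF A_erg ij]
      by (intro pair_queue_stable_stat_U[where A=A, OF A_ij _ _ A_int eps rate]) simp_all
  qed
qed

end
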